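(* Consider a mean-variance team stochastic game as described in the context. Let $\boldsymbol{\mu}\in\mathcal{U}$ and let $i_1,\dots,i_N$ be an ordering of the agents. Then for any joint policy $\boldsymbol{\mu}'\in\mathcal{U}$, $$J(\boldsymbol{\mu}')\ge J(\boldsymbol{\mu})+\sum_{h=1}^N\Big[\mathcal{L}_{f,i_{1:h}}^{\boldsymbol{\mu}}(\boldsymbol{\mu}'_{i_{1:h-1}},\mu'_{i_h})-W(\mu'_{i_h},\mu_{i_h})\Big],$$ where $W(\mu'_{i_h},\mu_{i_h})=(\kappa^*-1)\epsilon_f\sqrt{2\,\mathbb{E}_{s\sim\pi^{\boldsymbol{\mu}}}D_{\mathrm{KL}}(\mu'_{i_h}(\cdot|s)\,\|\,\mu_{i_h}(\cdot|s))}$ and $\epsilon_f=\max_s|\mathbb{E}_{\boldsymbol{a}\sim\boldsymbol{\mu}'(\cdot|s)}[A_f^{\boldsymbol{\mu}}(s,\boldsymbol{a})]|$.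
   Context: Game: finite agents $\mathcal{N}=\{1,\dots,N\}$, finite state space $\mathcal{S}$, finite action sets $\mathcal{A}_i$, $\mathcal{A}=\prod_i\mathcal{A}_i$, transition kernel $P(s'|s,\boldsymbol{a})$, common reward $r:\mathcal{S}\times\mathcal{A}\to\mathbb{R}$. Policies $\mu_i:\mathcal{S}\to\Delta(\mathcal{A}_i)$ (set $\mathcal{U}_i$); joint policies $\boldsymbol{\mu}\in\mathcal{U}=\prod_i\mathcal{U}_i$ with $\boldsymbol{\mu}(\boldsymbol{a}|s)=\prod_i\mu_i(a_i|s)$; for agents $i_{1:h}=(i_1,\dots,i_h)$, $\boldsymbol{a}_{i_{1:h}}$ is their action tuple, $-i_{1:h}$ the other agents, and $\boldsymbol{\mu}'_{i_{1:h-1}}(\boldsymbol{a}_{i_{1:h-1}}|s)=\prod_{j<h}\mu'_{i_j}(a_{i_j}|s)$. Standing assumption: the chain $P^{\boldsymbol{\mu}}(s'|s)=\sum_{\boldsymbol{a}}\boldsymbol{\mu}(\boldsymbol{a}|s)P(s'|s,\boldsymbol{a})$ is ergodic for every $\boldsymbol{\mu}\in\mathcal{U}$, stationary distribution $\pi^{\boldsymbol{\mu}}$. $\eta^{\boldsymbol{\mu}}=\sum_s\pi^{\boldsymbol{\mu}}(s)\sum_{\boldsymbol{a}}\boldsymbol{\mu}(\boldsymbol{a}|s)r(s,\boldsymbol{a})$; $\zeta^{\boldsymbol{\mu}}=\sum_s\pi^{\boldsymbol{\mu}}(s)\sum_{\boldsymbol{a}}\boldsymbol{\mu}(\boldsymbol{a}|s)(r(s,\boldsymbol{a})-\eta^{\boldsymbol{\mu}})^2$;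 for fixed $\beta\ge0$, $J(\boldsymbol{\mu})=\eta^{\boldsymbol{\mu}}-\beta\zeta^{\boldsymbol{\mu}}$. $f^{\boldsymbol{\mu}}(s,\boldsymbol{a})=r(s,\boldsymbol{a})-\beta(r(s,\boldsymbol{a})-\eta^{\boldsymbol{\mu}})^2$, $f^{\boldsymbol{\mu}}(s)=\sum_{\boldsymbol{a}}\boldsymbol{\mu}(\boldsymbol{a}|s)f^{\boldsymbol{\mu}}(s,\boldsymbol{a})$; $V_f^{\boldsymbol{\mu}}$ solves $V(s)=f^{\boldsymbol{\mu}}(s)-J(\boldsymbol{\mu})+\sum_{s'}P^{\boldsymbol{\mu}}(s'|s)V(s')$ (unique up to an additive constant); $Q_f^{\boldsymbol{\mu}}(s,\boldsymbol{a})=f^{\boldsymbol{\mu}}(s,\boldsymbol{a})-J(\boldsymbol{\mu})+\sum_{s'}P(s'|s,\boldsymbol{a})V_f^{\boldsymbol{\mu}}(s')$; $A_f^{\boldsymbol{\mu}}=Q_f^{\boldsymbol{\mu}}-V_f^{\boldsymbol{\mu}}$. Multi-agent functions: $Q_{f,i_{1:h}}^{\boldsymbol{\mu}}(s,\boldsymbol{a}_{i_{1:h}})=\mathbb{E}_{\boldsymbol{a}_{-i_{1:h}}\sim\boldsymbol{\mu}_{-i_{1:h}}(\cdot|s)}[Q_f^{\boldsymbol{\mu}}(s,\boldsymbol{a}_{i_{1:h}},\boldsymbol{a}_{-i_{1:h}})]$, $Q_{f,i_{1:0}}^{\boldsymbol{\mu}}(s)=V_f^{\boldsymbol{\mu}}(s)$,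 $A_{f,i_h}^{\boldsymbol{\mu}}(s,\boldsymbol{a}_{i_{1:h-1}},a_{i_h})=Q_{f,i_{1:h}}^{\boldsymbol{\mu}}(s,\boldsymbol{a}_{i_{1:h-1}},a_{i_h})-Q_{f,i_{1:h-1}}^{\boldsymbol{\mu}}(s,\boldsymbol{a}_{i_{1:h-1}})$, and $\mathcal{L}_{f,i_{1:h}}^{\boldsymbol{\mu}}(\boldsymbol{\mu}'_{i_{1:h-1}},\hat\mu_{i_h})=\mathbb{E}_{s\sim\pi^{\boldsymbol{\mu}},\boldsymbol{a}_{i_{1:h-1}}\sim\boldsymbol{\mu}'_{i_{1:h-1}}(\cdot|s),a_{i_h}\sim\hat\mu_{i_h}(\cdot|s)}[A_{f,i_h}^{\boldsymbol{\mu}}(s,\boldsymbol{a}_{i_{1:h-1}},a_{i_h})]$. $D_{\mathrm{KL}}$ is the Kullback–Leibler divergence. $\kappa^{\boldsymbol{\mu}}$ is Kemeny's constant of the chain $P^{\boldsymbol{\mu}}$, taken as the trace of $(I-P^{\boldsymbol{\mu}}+\boldsymbol{e}\pi^{\boldsymbol{\mu}})^{-1}$ (equivalently $\sum_{s'}\pi^{\boldsymbol{\mu}}(s')m^{\boldsymbol{\mu}}(s,s')$ with $m^{\boldsymbol{\mu}}(s,s')$ the mean first time $t\ge1$ to reach $s'$ from $s$), and $\kappa^*=\max_{\boldsymbol{\mu}\in\mathcal{U}}\kappa^{\boldsymbol{\mu}}$. *)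

theory Defs
  imports "HOL-Analysis.Analysis" "HOL-Library.Extended_Real"
begin

text \<open>A (per-agent) policy is
  mu_i :: 's => 'a => real (a probability distribution on Act i for each state);
  a joint policy is mu :: 'i => 's => 'a => real.\<close>

definition joint_actions :: "('i \<Rightarrow> 'a set) \<Rightarrow> ('i \<Rightarrow> 'a) set" where
  "joint_actions Act = PiE UNIV Act"

definition agent_policy :: "'a set \<Rightarrow> ('s \<Rightarrow> 'a \<Rightarrow> real) \<Rightarrow> bool" where
  "agent_policy A m \<longleftrightarrow> (\<forall>s. (\<forall>a. 0 \<le> m s a) \<and> (\<forall>a. a \<notin> A \<longrightarrow> m s a = 0) \<and> sum (m s) A = 1)"

definition joint_policies :: "('i \<Rightarrow> 'a set) \<Rightarrow> ('i \<Rightarrow> 's \<Rightarrow> 'a \<Rightarrow> real) set" where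
  "joint_policies Act = {mu. \<forall>i. agent_policy (Act i) (mu i)}"

definition jprob :: "('i::finite \<Rightarrow> 's \<Rightarrow> 'a \<Rightarrow> real) \<Rightarrow> 's \<Rightarrow> ('i \<Rightarrow> 'a) \<Rightarrow> real" where
  "jprob mu s a = (\<Prod>i\<in>UNIV. mu i s (a i))"

definition Pmu :: "('i::finite \<Rightarrow> 'a set) \<Rightarrow> ('s \<Rightarrow> ('i \<Rightarrow> 'a) \<Rightarrow> 's \<Rightarrow> real)
    \<Rightarrow> ('i \<Rightarrow> 's \<Rightarrow> 'a \<Rightarrow> real) \<Rightarrow> 's \<Rightarrow> 's \<Rightarrow> real" where
  "Pmu Act P mu s s' = (\<Sum>a\<in>joint_actions Act. jprob mu s a * P s a s')"

fun mpow :: "('s::finite \<Rightarrow> 's \<Rightarrow> real) \<Rightarrow> nat \<Rightarrow> 's \<Rightarrow> 's \<Rightarrow> real" where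
  "mpow M 0 s s' = (if s = s' then 1 else 0)"
| "mpow M (Suc n) s s' = (\<Sum>t\<in>UNIV. mpow M n s t * M t s')"

definition irreducible_chain :: "('s::finite \<Rightarrow> 's \<Rightarrow> real) \<Rightarrow> bool" where
  "irreducible_chain M \<longleftrightarrow> (\<forall>s s'. \<exists>n>0. mpow M n s s' > 0)"

definition aperiodic_chain :: "('s::finite \<Rightarrow> 's \<Rightarrow> real) \<Rightarrow> bool" where
  "aperiodic_chain M \<longleftrightarrow> (\<forall>s. Gcd {n. n > 0 \<and> mpow M n s s > 0} = 1)"

definition ergodic_chain :: "('s::finite \<Rightarrow> 's \<Rightarrow> real) \<Rightarrow> bool" where
  "ergodic_chain M \<longleftrightarrow> irreducible_chain M \<and> aperiodic_chain M"

text \<open>Stationary distribution (unique for ergodic chains).\<close>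
definition stat_dist :: "('s::finite \<Rightarrow> 's \<Rightarrow> real) \<Rightarrow> 's \<Rightarrow> real" where
  "stat_dist M = (THE p. (\<forall>s. 0 \<le> p s) \<and> (\<Sum>s\<in>UNIV. p s) = 1 \<and>
                         (\<forall>s'. (\<Sum>s\<in>UNIV. p s * M s s') = p s'))"

definition kemeny :: "('s::finite \<Rightarrow> 's \<Rightarrow> real) \<Rightarrow> real" where
  "kemeny M = trace (matrix_inv (mat 1 - (\<chi> s s'. M s s') + (\<chi> s s'. stat_dist M s')))"

definition kappa_star :: "('i::finite \<Rightarrow> 'a set) \<Rightarrow> ('s::finite \<Rightarrow> ('i \<Rightarrow> 'a) \<Rightarrow> 's \<Rightarrow> real) \<Rightarrow> real" where
  "kappa_star Act P = (SUP mu\<in>joint_policies Act. kemeny (Pmu Act P mu))"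

definition pi_mu where
  "pi_mu Act P mu = stat_dist (Pmu Act P mu)"

definition eta :: "('i::finite \<Rightarrow> 'a set) \<Rightarrow> ('s::finite \<Rightarrow> ('i \<Rightarrow> 'a) \<Rightarrow> 's \<Rightarrow> real)
    \<Rightarrow> ('s \<Rightarrow> ('i \<Rightarrow> 'a) \<Rightarrow> real) \<Rightarrow> ('i \<Rightarrow> 's \<Rightarrow> 'a \<Rightarrow> real) \<Rightarrow> real" where
  "eta Act P r mu = (\<Sum>s\<in>UNIV. pi_mu Act P mu s * (\<Sum>a\<in>joint_actions Act. jprob mu s a * r s a))"

definition zeta :: "('i::finite \<Rightarrow> 'a set) \<Rightarrow> ('s::finite \<Rightarrow> ('i \<Rightarrow> 'a) \<Rightarrow> 's \<Rightarrow> real)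
    \<Rightarrow> ('s \<Rightarrow> ('i \<Rightarrow> 'a) \<Rightarrow> real) \<Rightarrow> ('i \<Rightarrow> 's \<Rightarrow> 'a \<Rightarrow> real) \<Rightarrow> real" where
  "zeta Act P r mu = (\<Sum>s\<in>UNIV. pi_mu Act P mu s *
      (\<Sum>a\<in>joint_actions Act. jprob mu s a * (r s a - eta Act P r mu)\<^sup>2))"

definition Jmv :: "('i::finite \<Rightarrow> 'a set) \<Rightarrow> ('s::finite \<Rightarrow> ('i \<Rightarrow> 'a) \<Rightarrow> 's \<Rightarrow> real)
    \<Rightarrow> ('s \<Rightarrow> ('i \<Rightarrow> 'a) \<Rightarrow> real) \<Rightarrow> real \<Rightarrow> ('i \<Rightarrow> 's \<Rightarrow> 'a \<Rightarrow> real) \<Rightarrow> real" where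
  "Jmv Act P r beta mu = eta Act P r mu - beta * zeta Act P r mu"

definition fsa where
  "fsa Act P r beta mu s a = r s a - beta * (r s a - eta Act P r mu)\<^sup>2"

definition fs where
  "fs Act P r beta mu s = (\<Sum>a\<in>joint_actions Act. jprob mu s a * fsa Act P r beta mu s a)"

text \<open>A solution of the Poisson equation (unique up to an additive constant; all
  quantities below are invariant under that constant).\<close>
definition Vf :: "('i::finite \<Rightarrow> 'a set) \<Rightarrow> ('s::finite \<Rightarrow> ('i \<Rightarrow> 'a) \<Rightarrow> 's \<Rightarrow> real)
    \<Rightarrow> ('s \<Rightarrow> ('i \<Rightarrow> 'a) \<Rightarrow> real) \<Rightarrow> real \<Rightarrow> ('i \<Rightarrow> 's \<Rightarrow> 'a \<Rightarrow> real) \<Rightarrow> 's \<Rightarrow> real" where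
  "Vf Act P r beta mu = (SOME V. \<forall>s. V s = fs Act P r beta mu s - Jmv Act P r beta mu
                                     + (\<Sum>s'\<in>UNIV. Pmu Act P mu s s' * V s'))"

definition Qf where
  "Qf Act P r beta mu s a = fsa Act P r beta mu s a - Jmv Act P r beta mu
                            + (\<Sum>s'\<in>UNIV. P s a s' * Vf Act P r beta mu s')"

definition Af where
  "Af Act P r beta mu s a = Qf Act P r beta mu s a - Vf Act P r beta mu s"

definition QfS :: "('i::finite \<Rightarrow> 'a set) \<Rightarrow> ('s::finite \<Rightarrow> ('i \<Rightarrow> 'a) \<Rightarrow> 's \<Rightarrow> real)
    \<Rightarrow> ('s \<Rightarrow> ('i \<Rightarrow> 'a) \<Rightarrow> real) \<Rightarrow> real \<Rightarrow> ('i \<Rightarrow> 's \<Rightarrow> 'a \<Rightarrow> real)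
    \<Rightarrow> 'i set \<Rightarrow> 's \<Rightarrow> ('i \<Rightarrow> 'a) \<Rightarrow> real" where
  "QfS Act P r beta mu S s b =
     (if S = {} then Vf Act P r beta mu s
      else (\<Sum>c\<in>PiE (UNIV - S) Act. (\<Prod>j\<in>UNIV - S. mu j s (c j)) *
              Qf Act P r beta mu s (\<lambda>j. if j \<in> S then b j else c j)))"

definition AfAgent where
  "AfAgent Act P r beta mu S ih s b a =
     QfS Act P r beta mu (insert ih S) s (b(ih := a)) - QfS Act P r beta mu S s b"

text \<open>Surrogate L^{mu}_{f,S,ih}(mu'_S, hat mu_ih); only the components of mu' in S are used.\<close>
definition Lf where
  "Lf Act P r beta mu S ih mu' muhat =
     (\<Sum>s\<in>UNIV. pi_mu Act P mu s *
        (\<Sum>b\<in>PiE S Act. (\<Prod>j\<in>S. mu' j s (b j)) *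
           (\<Sum>a\<in>Act ih. muhat s a * AfAgent Act P r beta mu S ih s b a)))"

definition KL :: "'a set \<Rightarrow> ('a \<Rightarrow> real) \<Rightarrow> ('a \<Rightarrow> real) \<Rightarrow> ereal" where
  "KL A p q = (\<Sum>a\<in>A. if p a = 0 then 0 else if q a = 0 then \<infinity>
                         else ereal (p a * ln (p a / q a)))"

definition esqrt :: "ereal \<Rightarrow> ereal" where
  "esqrt x = (if x = \<infinity> then \<infinity> else ereal (sqrt (real_of_ereal x)))"

definition eps_f where
  "eps_f Act P r beta mu mu' =
     Max (range (\<lambda>s. \<bar>\<Sum>a\<in>joint_actions Act. jprob mu' s a * Af Act P r beta mu s a\<bar>))"

definition Wpen where
  "Wpen Act P r beta mu mu' ih =
     ereal ((kappa_star Act P - 1) * eps_f Act P r beta mu mu') *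
     esqrt (2 * (\<Sum>s\<in>UNIV. ereal (pi_mu Act P mu s) * KL (Act ih) (mu' ih s) (mu ih s)))"

end

theory Submission
  imports Defs
begin

text \<open>
Let \<pi>, \<pi>' be the stationary distributions of P^\<mu>, P^\<mu>' and let g(s) be the mean of
A_f^\<mu>(s, a) over a ~ \<mu>'(s). Under \<pi>' the value terms of g cancel, leaving
E_\<pi>' g = J(\<mu>') - J(\<mu>) - \<beta>(\<eta>' - \<eta>)^2 \<le> J(\<mu>') - J(\<mu>). Under \<pi>, the multi-agent
advantages telescope along the ordering, so E_\<pi> g is the sum of the surrogates L_h.

The two averages differ by \<pi>(P^\<mu> - P^\<mu>')Z'g, where Z' = (I - P^\<mu>' + e\<pi>')^-1 is the
fundamental matrix of P^\<mu>'. The numbers Z'_kk - Z'_ik are \<pi>'(k) times mean first passage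
times, hence nonnegative, and they sum over k to \<kappa>' - 1; so Z'g oscillates by at most
2(\<kappa>' - 1)\<epsilon>_f, and the gap is at most (\<kappa>' - 1)\<epsilon>_f E_\<pi> |P^\<mu>(s) - P^\<mu>'(s)|_1. This
distance is at most the sum of the agents' total variations, and by Pinsker's and Jensen's
inequalities the expected total variation of agent i is at most sqrt(2 E_\<pi> KL(\<mu>'_i, \<mu>_i)).
Finally \<kappa>' \<le> \<kappa>*.
\<close>

section \<open>Stochastic matrices\<close>

definition stochastic :: "('s::finite \<Rightarrow> 's \<Rightarrow> real) \<Rightarrow> bool" where
  "stochastic M \<longleftrightarrow> (\<forall>s s'. 0 \<le> M s s') \<and> (\<forall>s. (\<Sum>s'\<in>UNIV. M s s') = 1)"

definition stationary :: "('s::finite \<Rightarrow> 's \<Rightarrow> real) \<Rightarrow> ('s \<Rightarrow> real) \<Rightarrow> bool" where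
  "stationary M p \<longleftrightarrow>
     (\<forall>s. 0 \<le> p s) \<and> (\<Sum>s\<in>UNIV. p s) = 1 \<and> (\<forall>s'. (\<Sum>s\<in>UNIV. p s * M s s') = p s')"

definition connected_within :: "('s::finite \<Rightarrow> 's \<Rightarrow> real) \<Rightarrow> real \<Rightarrow> nat \<Rightarrow> bool" where
  "connected_within M q N \<longleftrightarrow> (\<forall>i k. \<exists>n\<le>N. (i, k) \<in> {(a, b). q \<le> M a b} ^^ n)"

lemma stochastic_nonneg: "stochastic M \<Longrightarrow> 0 \<le> M s s'"
  by (simp add: stochastic_def)

lemma stochastic_row_sum: "stochastic M \<Longrightarrow> (\<Sum>s'\<in>UNIV. M s s') = 1"
  by (simp add: stochastic_def)

lemma stochastic_row_sum_const: "stochastic M \<Longrightarrow> (\<Sum>j\<in>UNIV. M a j * c) = c"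
  by (simp add: sum_distrib_right[symmetric] stochastic_row_sum)

lemma stationary_nonneg: "stationary M p \<Longrightarrow> 0 \<le> p s"
  by (simp add: stationary_def)

lemma stationary_sum: "stationary M p \<Longrightarrow> (\<Sum>s\<in>UNIV. p s) = 1"
  by (simp add: stationary_def)

lemma stationary_le_1:
  assumes "stationary M p" shows "p k \<le> 1"
proof -
  have "p k \<le> (\<Sum>s\<in>UNIV. p s)"
    using assms by (intro member_le_sum) (auto simp: stationary_nonneg)
  then show ?thesis using assms by (simp add: stationary_sum)
qed

lemma stationary_sum_step:
  assumes "stationary M p"
  shows "(\<Sum>i\<in>UNIV. p i * (\<Sum>j\<in>UNIV. M i j * x j)) = (\<Sum>j\<in>UNIV. p j * x j)"
proof -
  have "(\<Sum>i\<in>UNIV. p i * (\<Sum>j\<in>UNIV. M i j * x j)) = (\<Sum>j\<in>UNIV. (\<Sum>i\<in>UNIV. p i * M i j) * x j)"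
    by (simp add: sum_distrib_left sum_distrib_right mult.assoc) (rule sum.swap)
  also have "\<dots> = (\<Sum>j\<in>UNIV. p j * x j)" using assms by (simp add: stationary_def)
  finally show ?thesis .
qed

lemma exists_maximizer:
  fixes x :: "'s::finite \<Rightarrow> real" obtains i0 where "\<And>j. x j \<le> x i0"
proof -
  have "Max (range x) \<in> range x" by (rule Max_in) auto
  then obtain i0 where "Max (range x) = x i0" by blast
  moreover have "x j \<le> Max (range x)" for j by (rule Max_ge) auto
  ultimately show thesis using that by auto
qed

lemma exists_minimizer:
  fixes x :: "'s::finite \<Rightarrow> real" obtains i0 where "\<And>j. x i0 \<le> x j"
  using exists_maximizer[of "\<lambda>i. - x i"] by (metis neg_le_iff_le)

lemma potential_edge_step:
  assumes M: "stochastic M" and D: "\<And>j. 0 \<le> D j" and q: "q \<le> M a b"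
    and mean: "(\<Sum>j\<in>UNIV. M a j * D j) \<le> D a + c"
  shows "q * D b - c \<le> D a"
proof -
  have "q * D b \<le> M a b * D b" using q D[of b] by (rule mult_right_mono)
  also have "\<dots> \<le> (\<Sum>j\<in>UNIV. M a j * D j)"
    using M D by (intro member_le_sum[where f = "\<lambda>j. M a j * D j"]) (auto simp: stochastic_nonneg)
  finally show ?thesis using mean by simp
qed

lemma potential_bound_along_path:
  fixes D :: "'s \<Rightarrow> real"
  assumes "(i, k) \<in> E ^^ n" and edge: "\<And>a b. (a, b) \<in> E \<Longrightarrow> a \<noteq> k \<Longrightarrow> q * D b - e \<le> D a"
    and D: "\<And>a. 0 \<le> D a" and q: "0 \<le> q" "q \<le> 1" and e: "0 \<le> e"
  shows "q ^ n * D k - n * e \<le> D i"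
  using assms(1)
proof (induction n arbitrary: i)
  case 0
  then show ?case by simp
next
  case (Suc n)
  from relpow_Suc_D2[OF Suc.prems] obtain j where ij: "(i, j) \<in> E" and jk: "(j, k) \<in> E ^^ n"
    by blast
  show ?case
  proof (cases "i = k")
    case True
    have "q ^ Suc n \<le> 1" using q by (intro power_le_one)
    then have "q ^ Suc n * D k \<le> D k" using D[of k] q by (simp add: mult_left_le_one_le)
    moreover have "0 \<le> real (Suc n) * e" using e by simp
    ultimately show ?thesis unfolding True by linarith
  next
    case False
    have "q * D j - e \<le> D i" using edge[OF ij False] .
    moreover have "q * (q ^ n * D k - n * e) \<le> q * D j"
      using Suc.IH[OF jk] q(1) by (rule mult_left_mono)
    moreover have "q * (n * e) \<le> n * e" using q e by (simp add: mult_left_le_one_le)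
    ultimately show ?thesis by (simp add: algebra_simps)
  qed
qed

lemma potential_vanishes_along_path:
  fixes D :: "'s \<Rightarrow> real"
  assumes "(i, k) \<in> E ^^ n" and edge: "\<And>a b. (a, b) \<in> E \<Longrightarrow> a \<noteq> k \<Longrightarrow> q * D b \<le> D a"
    and D: "\<And>a. 0 \<le> D a" and q: "0 < q" "q \<le> 1" and Di: "D i = 0"
  shows "D k = 0"
proof -
  have "q ^ n * D k \<le> 0"
    using potential_bound_along_path[OF assms(1), of q D 0] edge D q Di by simp
  moreover have "0 < q ^ n" using q by simp
  ultimately show ?thesis using D[of k] by (simp add: mult_le_0_iff)
qed

lemma stochastic_harmonic_constant:
  assumes M: "stochastic M" and C: "connected_within M q N" and q: "0 < q" "q \<le> 1"
    and harmonic: "\<And>i. x i = (\<Sum>j\<in>UNIV. M i j * x j)"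
  shows "x i = x k"
proof -
  obtain i0 where max: "\<And>j. x j \<le> x i0" using exists_maximizer by blast
  define D where "D j = x i0 - x j" for j
  have D: "0 \<le> D j" for j using max by (simp add: D_def)
  have mean: "(\<Sum>j\<in>UNIV. M a j * D j) = D a" for a
    using stochastic_row_sum_const[OF M] harmonic[of a]
    by (simp add: D_def right_diff_distrib sum_subtractf)
  have "D k' = 0" for k'
  proof -
    obtain n where path: "(i0, k') \<in> {(a, b). q \<le> M a b} ^^ n"
      using C by (auto simp: connected_within_def)
    have "q * D b \<le> D a" if "(a, b) \<in> {(a, b). q \<le> M a b}" for a b
      using potential_edge_step[OF M, where D = D and q = q and a = a and b = b and c = 0]
        D that mean[of a]
      by simp
    then show ?thesis
      using potential_vanishes_along_path[OF path, where D = D and q = q] D q by (simp add: D_def)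
  qed
  then show ?thesis unfolding D_def by (metis eq_iff_diff_eq_0)
qed

context
  fixes M :: "'s::finite \<Rightarrow> 's \<Rightarrow> real" and q :: real and N :: nat
    and y :: "'s \<Rightarrow> real" and c :: real and k :: 's
  assumes M: "stochastic M" and C: "connected_within M q N" and q: "0 < q" "q \<le> 1"
    and c: "0 \<le> c" and yk: "y k = 0"
    and hit: "\<And>i. i \<noteq> k \<Longrightarrow> y i = c + (\<Sum>j\<in>UNIV. M i j * y j)"
begin

lemma hitting_equation_nonneg: "0 \<le> y i"
proof -
  obtain i0 where min: "\<And>j. y i0 \<le> y j" using exists_minimizer by blast
  define D where "D j = y j - y i0" for j
  have D: "0 \<le> D j" for j using min by (simp add: D_def)
  obtain n where path: "(i0, k) \<in> {(a, b). q \<le> M a b} ^^ n"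
    using C by (auto simp: connected_within_def)
  have "q * D b \<le> D a" if "(a, b) \<in> {(a, b). q \<le> M a b}" "a \<noteq> k" for a b
  proof -
    have "(\<Sum>j\<in>UNIV. M a j * D j) = D a - c"
      using stochastic_row_sum_const[OF M] hit[OF that(2)]
      by (simp add: D_def right_diff_distrib sum_subtractf)
    then show ?thesis
      using potential_edge_step[OF M, where D = D and q = q and a = a and b = b and c = 0] D that c
      by simp
  qed
  then have "D k = 0" using potential_vanishes_along_path[OF path, where D = D and q = q] D q
    by (simp add: D_def)
  then show "0 \<le> y i" using min[of i] yk by (simp add: D_def)
qed

lemma hitting_equation_le: "y i \<le> N * c / q ^ N"
proof -
  obtain i1 where max: "\<And>j. y j \<le> y i1" using exists_maximizer by blast
  define D where "D j = y i1 - y j" for j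
  have D: "0 \<le> D j" for j using max by (simp add: D_def)
  obtain n where "n \<le> N" and path: "(i1, k) \<in> {(a, b). q \<le> M a b} ^^ n"
    using C by (auto simp: connected_within_def)
  have "q * D b - c \<le> D a" if "(a, b) \<in> {(a, b). q \<le> M a b}" "a \<noteq> k" for a b
  proof -
    have "(\<Sum>j\<in>UNIV. M a j * D j) = D a + c"
      using stochastic_row_sum_const[OF M] hit[OF that(2)]
      by (simp add: D_def right_diff_distrib sum_subtractf)
    then show ?thesis
      using potential_edge_step[OF M, where D = D and q = q and a = a and b = b and c = c] D that
      by simp
  qed
  then have "q ^ n * D k - n * c \<le> D i1"
    using potential_bound_along_path[OF path, where D = D and q = q and e = c] D q c by simp
  then have "q ^ n * y i1 \<le> n * c" using yk by (simp add: D_def)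
  then have "y i1 \<le> n * c / q ^ n" using q by (simp add: pos_le_divide_eq mult.commute)
  also have "\<dots> \<le> N * c / q ^ N"
    using \<open>n \<le> N\<close> q c
    by (intro frac_le mult_right_mono power_decreasing) (auto simp: of_nat_mono)
  finally show "y i \<le> N * c / q ^ N" using max[of i] by linarith
qed

end

lemma stochastic_left_eigenvector:
  fixes M :: "'s::finite \<Rightarrow> 's \<Rightarrow> real"
  assumes M: "stochastic M"
  obtains w :: "'s \<Rightarrow> real" and i0 where "w i0 \<noteq> 0" and "\<And>j. (\<Sum>i\<in>UNIV. w i * M i j) = w j"
proof -
  define B :: "real^'s^'s" where "B = mat 1 - (\<chi> s s'. M s s')"
  have "B *v (\<chi> i. 1) = 0"
    by (simp add: vec_eq_iff matrix_vector_mult_def B_def mat_def sum_subtractf stochastic_row_sum[OF M])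
  moreover have "(\<chi> i. 1) \<noteq> (0::real^'s)" by (simp add: vec_eq_iff)
  ultimately have "\<nexists>C. C ** B = mat 1" using matrix_left_invertible_ker[of B] by blast
  then have "\<nexists>C. C ** transpose B = mat 1"
    using matrix_left_right_inverse left_invertible_transpose[of B] by blast
  then obtain v where v: "transpose B *v v = 0" "v \<noteq> 0"
    using matrix_left_invertible_ker[of "transpose B"] by blast
  obtain i0 where "v $ i0 \<noteq> 0" using v(2) by (auto simp: vec_eq_iff)
  then show thesis
  proof (rule that[of "\<lambda>i. v $ i"])
    fix j
    have "0 = (transpose B *v v) $ j" using v by simp
    also have "\<dots> = v $ j - (\<Sum>i\<in>UNIV. M i j * v $ i)"
      by (simp add: matrix_vector_mult_def transpose_def B_def mat_def left_diff_distrib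
          sum_subtractf if_distrib[of "\<lambda>x. x * _"] cong: if_cong)
    finally show "(\<Sum>i\<in>UNIV. v $ i * M i j) = v $ j" by (simp add: mult.commute)
  qed
qed

lemma stationary_exists:
  assumes M: "stochastic M" obtains p where "stationary M p"
proof -
  obtain w i0 where "w i0 \<noteq> 0" and w: "\<And>j. (\<Sum>i\<in>UNIV. w i * M i j) = w j"
    using stochastic_left_eigenvector[OF M] by blast
  have le: "\<bar>w j\<bar> \<le> (\<Sum>i\<in>UNIV. \<bar>w i\<bar> * M i j)" for j
  proof -
    have "\<bar>w j\<bar> \<le> (\<Sum>i\<in>UNIV. \<bar>w i * M i j\<bar>)" unfolding w[of j, symmetric] by (rule sum_abs)
    then show ?thesis using stochastic_nonneg[OF M] by (simp add: abs_mult)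
  qed
  have "(\<Sum>j\<in>UNIV. (\<Sum>i\<in>UNIV. \<bar>w i\<bar> * M i j)) = (\<Sum>i\<in>UNIV. \<bar>w i\<bar>)"
    by (subst sum.swap) (simp add: sum_distrib_left[symmetric] stochastic_row_sum[OF M])
  then have "(\<Sum>j\<in>UNIV. (\<Sum>i\<in>UNIV. \<bar>w i\<bar> * M i j) - \<bar>w j\<bar>) = 0"
    by (simp add: sum_subtractf)
  \<comment> \<open>the inequalities \<open>le\<close> sum to an equality, so each of them is one\<close>
  then have eq: "(\<Sum>i\<in>UNIV. \<bar>w i\<bar> * M i j) = \<bar>w j\<bar>" for j
    using le sum_nonneg_eq_0_iff[of UNIV "\<lambda>j. (\<Sum>i\<in>UNIV. \<bar>w i\<bar> * M i j) - \<bar>w j\<bar>"] by simp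
  define S where "S = (\<Sum>i\<in>UNIV. \<bar>w i\<bar>)"
  have "0 < S" unfolding S_def using \<open>w i0 \<noteq> 0\<close> by (intro sum_pos2[of UNIV i0]) auto
  then have "stationary M (\<lambda>i. \<bar>w i\<bar> / S)"
    using eq by (simp add: stationary_def sum_divide_distrib[symmetric] S_def[symmetric])
  then show thesis by (rule that)
qed

lemma mpow_nonneg: "stochastic M \<Longrightarrow> 0 \<le> mpow M n s s'"
  by (induction n arbitrary: s') (auto intro!: sum_nonneg mult_nonneg_nonneg simp: stochastic_nonneg)

lemma mpow_pos_imp_relpow:
  assumes M: "stochastic M"
  shows "0 < mpow M n s s' \<Longrightarrow> (s, s') \<in> {(a, b). 0 < M a b} ^^ n"
proof (induction n arbitrary: s')
  case 0
  then show ?case by (simp split: if_splits)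
next
  case (Suc n)
  then obtain t where "0 < mpow M n s t * M t s'"
    by (metis (no_types, lifting) mpow.simps(2) not_le sum_nonpos)
  then have "0 < mpow M n s t" "0 < M t s'"
    using mpow_nonneg[OF M, of n s t] stochastic_nonneg[OF M, of t s'] by (auto simp: zero_less_mult_iff)
  then show ?case using Suc.IH by (auto intro: relpow_Suc_I)
qed

lemma irreducible_chain_short_paths:
  fixes M :: "'s::finite \<Rightarrow> 's \<Rightarrow> real"
  assumes M: "stochastic M" and irr: "irreducible_chain M"
  obtains n where "n \<le> CARD('s \<times> 's)" and "(i, k) \<in> {(a, b). 0 < M a b} ^^ n"
proof -
  let ?R = "{(a, b). 0 < M a b}"
  obtain n where "0 < n" "0 < mpow M n i k" using irr by (auto simp: irreducible_chain_def)
  then have "(i, k) \<in> ?R\<^sup>+" using mpow_pos_imp_relpow[OF M] trancl_power by blast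
  then obtain m where "m \<le> card ?R" "(i, k) \<in> ?R ^^ m" using trancl_finite_eq_relpow[of ?R] by auto
  moreover have "card ?R \<le> CARD('s \<times> 's)" by (rule card_mono) auto
  ultimately show thesis using that by (meson le_trans)
qed

section \<open>The fundamental matrix\<close>

definition fundamental_matrix_inverse :: "('s::finite \<Rightarrow> 's \<Rightarrow> real) \<Rightarrow> ('s \<Rightarrow> real) \<Rightarrow> real^'s^'s"
  where "fundamental_matrix_inverse M p = mat 1 - (\<chi> s s'. M s s') + (\<chi> s s'. p s')"

definition fundamental_matrix :: "('s::finite \<Rightarrow> 's \<Rightarrow> real) \<Rightarrow> ('s \<Rightarrow> real) \<Rightarrow> real^'s^'s"
  where "fundamental_matrix M p = matrix_inv (fundamental_matrix_inverse M p)"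

lemma fundamental_matrix_inverse_entry:
  "fundamental_matrix_inverse M p $ i $ j = (if i = j then 1 else 0) - M i j + p j"
  by (simp add: fundamental_matrix_inverse_def mat_def)

lemma kemeny_eq_trace_fundamental_matrix:
  "kemeny M = trace (fundamental_matrix M (stat_dist M))"
  by (simp add: kemeny_def fundamental_matrix_def fundamental_matrix_inverse_def)

lemma invertible_fundamental_matrix_inverse:
  fixes M :: "'s::finite \<Rightarrow> 's \<Rightarrow> real"
  assumes M: "stochastic M" and C: "connected_within M q N" and q: "0 < q" "q \<le> 1"
    and p: "stationary M p"
  shows "invertible (fundamental_matrix_inverse M p)"
proof -
  have "x = 0" if x: "fundamental_matrix_inverse M p *v x = 0" for x :: "real^'s"
  proof -
    define c where "c = (\<Sum>j\<in>UNIV. p j * x $ j)"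
    have row: "x $ i - (\<Sum>j\<in>UNIV. M i j * x $ j) + c = 0" for i
    proof -
      have "0 = (fundamental_matrix_inverse M p *v x) $ i" using x by simp
      also have "\<dots> = x $ i - (\<Sum>j\<in>UNIV. M i j * x $ j) + c"
        by (simp add: matrix_vector_mult_def fundamental_matrix_inverse_entry c_def distrib_right
            left_diff_distrib sum.distrib sum_subtractf if_distrib[of "\<lambda>x. x * _"] cong: if_cong)
      finally show ?thesis by simp
    qed
    \<comment> \<open>averaging the rows against \<open>p\<close> kills the first two terms\<close>
    have "c = (\<Sum>i\<in>UNIV. p i * (x $ i - (\<Sum>j\<in>UNIV. M i j * x $ j) + c))"
      using stationary_sum_step[OF p, of "\<lambda>j. x $ j"] stationary_sum[OF p]
      by (simp add: distrib_left right_diff_distrib sum.distrib sum_subtractf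
          sum_distrib_right[symmetric] c_def)
    also have "\<dots> = 0" using row by simp
    finally have "c = 0" .
    then have const: "x $ j = x $ k" for j k
      using stochastic_harmonic_constant[OF M C q, of "\<lambda>i. x $ i"] row
      by (metis add_0 eq_iff_diff_eq_0 add.right_neutral)
    have "c = x $ k" for k
    proof -
      have "c = (\<Sum>j\<in>UNIV. p j) * x $ k"
        unfolding c_def sum_distrib_right using const by (intro sum.cong) auto
      then show ?thesis using stationary_sum[OF p] by simp
    qed
    then show "x = 0" using \<open>c = 0\<close> by (simp add: vec_eq_iff)
  qed
  then show ?thesis
    using matrix_left_invertible_ker invertible_left_inverse by blast
qed

lemma fundamental_matrix_inverse_mult:
  assumes "invertible (fundamental_matrix_inverse M p)"
  shows "fundamental_matrix_inverse M p ** fundamental_matrix M p = mat 1"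
    and "fundamental_matrix M p ** fundamental_matrix_inverse M p = mat 1"
  using someI_ex[OF assms[unfolded invertible_def]]
  by (simp_all add: fundamental_matrix_def matrix_inv_def)

context
  fixes M :: "'s::finite \<Rightarrow> 's \<Rightarrow> real" and p :: "'s \<Rightarrow> real"
  assumes M: "stochastic M" and p: "stationary M p"
    and inv: "invertible (fundamental_matrix_inverse M p)"
begin

private abbreviation (input) "A \<equiv> fundamental_matrix_inverse M p"
private abbreviation (input) "Z \<equiv> fundamental_matrix M p"

lemma stationary_eq_fundamental_matrix:
  assumes p': "stationary M p'" shows "p' k = (\<Sum>l\<in>UNIV. p l * Z $ l $ k)"
proof -
  have pA: "(\<Sum>i\<in>UNIV. p' i * A $ i $ j) = p j" for j
  proof -
    have "(\<Sum>i\<in>UNIV. p' i * A $ i $ j) = p' j - (\<Sum>i\<in>UNIV. p' i * M i j) + (\<Sum>i\<in>UNIV. p' i) * p j"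
      by (simp add: fundamental_matrix_inverse_entry distrib_left right_diff_distrib sum.distrib
          sum_subtractf sum_distrib_right if_distrib[of "\<lambda>x. _ * x"] cong: if_cong)
    then show ?thesis using p' by (simp add: stationary_def)
  qed
  have "p' k = (\<Sum>j\<in>UNIV. p' j * (A ** Z) $ j $ k)"
    using fundamental_matrix_inverse_mult(1)[OF inv] by (simp add: mat_def if_distrib cong: if_cong)
  also have "\<dots> = (\<Sum>l\<in>UNIV. (\<Sum>j\<in>UNIV. p' j * A $ j $ l) * Z $ l $ k)"
    by (simp add: matrix_matrix_mult_def sum_distrib_left sum_distrib_right mult.assoc) (rule sum.swap)
  finally show ?thesis by (simp add: pA)
qed

lemma fundamental_matrix_stationary: "(\<Sum>j\<in>UNIV. p j * Z $ j $ k) = p k"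
  by (rule stationary_eq_fundamental_matrix[OF p, symmetric])

lemma fundamental_matrix_row_sum: "(\<Sum>j\<in>UNIV. Z $ i $ j) = 1"
proof -
  have A_row: "(\<Sum>k\<in>UNIV. A $ j $ k) = 1" for j
    using M p by (simp add: fundamental_matrix_inverse_entry sum.distrib sum_subtractf
        stochastic_row_sum stationary_sum)
  have "1 = (\<Sum>k\<in>UNIV. (Z ** A) $ i $ k)"
    using fundamental_matrix_inverse_mult(2)[OF inv] by (simp add: mat_def)
  also have "\<dots> = (\<Sum>j\<in>UNIV. Z $ i $ j * (\<Sum>k\<in>UNIV. A $ j $ k))"
    by (simp add: matrix_matrix_mult_def sum_distrib_left) (rule sum.swap)
  finally show ?thesis by (simp add: A_row)
qed

lemma fundamental_matrix_equation:
  "Z $ i $ k - (\<Sum>j\<in>UNIV. M i j * Z $ j $ k) + p k = (if i = k then 1 else 0)"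
proof -
  have "(if i = k then 1 else 0) = (A ** Z) $ i $ k"
    using fundamental_matrix_inverse_mult(1)[OF inv] by (simp add: mat_def)
  also have "\<dots> = Z $ i $ k - (\<Sum>j\<in>UNIV. M i j * Z $ j $ k) + (\<Sum>j\<in>UNIV. p j * Z $ j $ k)"
    by (simp add: matrix_matrix_mult_def fundamental_matrix_inverse_entry distrib_right
        left_diff_distrib sum.distrib sum_subtractf if_distrib[of "\<lambda>x. x * _"] cong: if_cong)
  finally show ?thesis by (simp add: fundamental_matrix_stationary)
qed

end

lemma stat_dist_eqI:
  assumes M: "stochastic M" and C: "connected_within M q N" and q: "0 < q" "q \<le> 1"
    and p: "stationary M p"
  shows "stat_dist M = p"
proof -
  have inv: "invertible (fundamental_matrix_inverse M p)"
    by (rule invertible_fundamental_matrix_inverse[OF M C q p])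
  have "p' = p" if "stationary M p'" for p'
  proof
    fix k
    show "p' k = p k"
      using stationary_eq_fundamental_matrix[OF M p inv that, of k]
        stationary_eq_fundamental_matrix[OF M p inv p, of k] by linarith
  qed
  then show ?thesis
    unfolding stat_dist_def stationary_def[symmetric] using p by (blast intro: the_equality)
qed

section \<open>Perturbation of the stationary distribution\<close>

lemma zero_sum_oscillation_bound:
  fixes d h :: "'s::finite \<Rightarrow> real"
  assumes d: "(\<Sum>j\<in>UNIV. d j) = 0" and h: "\<And>a b. h a - h b \<le> 2 * B"
  shows "\<bar>\<Sum>j\<in>UNIV. d j * h j\<bar> \<le> B * (\<Sum>j\<in>UNIV. \<bar>d j\<bar>)"
proof -
  obtain a0 where a0: "\<And>j. h j \<le> h a0" using exists_maximizer by blast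
  obtain b0 where b0: "\<And>j. h b0 \<le> h j" using exists_minimizer by blast
  define m where "m = (h a0 + h b0) / 2"
  have hm: "\<bar>h j - m\<bar> \<le> B" for j
    using a0[of j] b0[of j] h[of a0 b0] by (simp add: m_def abs_le_iff field_simps)
  have "(\<Sum>j\<in>UNIV. d j * h j) = (\<Sum>j\<in>UNIV. d j * (h j - m))"
    using d by (simp add: right_diff_distrib sum_subtractf sum_distrib_right[symmetric])
  also have "\<bar>\<dots>\<bar> \<le> (\<Sum>j\<in>UNIV. \<bar>d j\<bar> * B)"
    using hm by (intro sum_abs[THEN order_trans] sum_mono) (simp add: abs_mult mult_left_mono)
  finally show ?thesis by (simp add: sum_distrib_left mult.commute)
qed

locale chain_perturbation =
  fixes M M' :: "'s::finite \<Rightarrow> 's \<Rightarrow> real" and p p' :: "'s \<Rightarrow> real" and q :: real and N :: nat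
  assumes M: "stochastic M" and M': "stochastic M'"
    and connected: "connected_within M' q N" and q: "0 < q" "q \<le> 1"
    and p: "stationary M p" and p': "stationary M' p'"
begin

abbreviation "Z \<equiv> fundamental_matrix M' p'"

lemma invertible: "invertible (fundamental_matrix_inverse M' p')"
  by (rule invertible_fundamental_matrix_inverse[OF M' connected q p'])

lemma kemeny_eq_diagonal_sum: "kemeny M' = (\<Sum>k\<in>UNIV. Z $ k $ k)"
  using kemeny_eq_trace_fundamental_matrix[of M'] stat_dist_eqI[OF M' connected q p']
  by (simp add: trace_def)

text \<open>\<open>passage i k\<close> is \<open>p' k\<close> times the mean first passage time from \<open>i\<close> to \<open>k\<close>.\<close>
definition passage :: "'s \<Rightarrow> 's \<Rightarrow> real" where
  "passage i k = Z $ k $ k - Z $ i $ k"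

lemma passage_hitting_equation:
  assumes "i \<noteq> k" shows "passage i k = p' k + (\<Sum>j\<in>UNIV. M' i j * passage j k)"
  using fundamental_matrix_equation[OF M' p' invertible, of i k] assms
    stochastic_row_sum_const[OF M', of i "Z $ k $ k"]
  by (simp add: passage_def right_diff_distrib sum_subtractf)

lemma passage_bounds: "0 \<le> passage i k" "passage i k \<le> N / q ^ N"
proof -
  have c: "0 \<le> p' k" using p' by (rule stationary_nonneg)
  have yk: "passage k k = 0" by (simp add: passage_def)
  note hitting = M' connected q c yk passage_hitting_equation
  show "0 \<le> passage i k" using hitting_equation_nonneg[OF hitting] .
  have "passage i k \<le> N * p' k / q ^ N" using hitting_equation_le[OF hitting] .
  also have "\<dots> \<le> N / q ^ N"
    using stationary_le_1[OF p', of k] c q by (intro divide_right_mono) (auto intro: mult_left_le)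
  finally show "passage i k \<le> N / q ^ N" .
qed

lemma passage_row_sum: "(\<Sum>k\<in>UNIV. passage i k) = kemeny M' - 1"
  using fundamental_matrix_row_sum[OF M' p' invertible, of i]
  by (simp add: passage_def kemeny_eq_diagonal_sum sum_subtractf)

lemma one_le_kemeny: "1 \<le> kemeny M'"
  using passage_row_sum[of undefined] passage_bounds(1) sum_nonneg[of UNIV "passage undefined"]
  by simp

lemma kemeny_le: "kemeny M' \<le> 1 + CARD('s) * (N / q ^ N)"
proof -
  have "(\<Sum>k\<in>UNIV. passage undefined k) \<le> (\<Sum>k\<in>(UNIV::'s set). N / q ^ N)"
    by (intro sum_mono passage_bounds(2))
  then show ?thesis using passage_row_sum[of undefined] by simp
qed

definition bias :: "('s \<Rightarrow> real) \<Rightarrow> 's \<Rightarrow> real" where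
  "bias g i = (\<Sum>k\<in>UNIV. Z $ i $ k * g k)"

lemma bias_oscillation:
  assumes g: "\<And>k. \<bar>g k\<bar> \<le> e"
  shows "bias g a - bias g b \<le> 2 * ((kemeny M' - 1) * e)"
proof -
  have "bias g a - bias g b = (\<Sum>k\<in>UNIV. (passage b k - passage a k) * g k)"
    by (simp add: bias_def passage_def left_diff_distrib sum_subtractf)
  also have "\<dots> \<le> (\<Sum>k\<in>UNIV. (passage a k + passage b k) * e)"
  proof (intro sum_mono)
    fix k
    have "\<bar>passage b k - passage a k\<bar> \<le> passage a k + passage b k"
      using passage_bounds(1)[of a k] passage_bounds(1)[of b k] by linarith
    then have "\<bar>(passage b k - passage a k) * g k\<bar> \<le> (passage a k + passage b k) * e"
      unfolding abs_mult using g[of k] by (intro mult_mono) auto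
    then show "(passage b k - passage a k) * g k \<le> (passage a k + passage b k) * e" by linarith
  qed
  also have "\<dots> = 2 * ((kemeny M' - 1) * e)"
    by (simp add: sum_distrib_right[symmetric] sum.distrib passage_row_sum)
  finally show ?thesis .
qed

lemma bias_poisson:
  "g i - (\<Sum>k\<in>UNIV. p' k * g k) = bias g i - (\<Sum>j\<in>UNIV. M' i j * bias g j)"
proof -
  have "g i = (\<Sum>k\<in>UNIV. (Z $ i $ k - (\<Sum>j\<in>UNIV. M' i j * Z $ j $ k) + p' k) * g k)"
    by (simp add: fundamental_matrix_equation[OF M' p' invertible] if_distrib[of "\<lambda>x. x * _"] cong: if_cong)
  also have "\<dots> = bias g i - (\<Sum>k\<in>UNIV. (\<Sum>j\<in>UNIV. M' i j * Z $ j $ k) * g k) + (\<Sum>k\<in>UNIV. p' k * g k)"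
    by (simp add: bias_def distrib_right left_diff_distrib sum.distrib sum_subtractf)
  also have "(\<Sum>k\<in>UNIV. (\<Sum>j\<in>UNIV. M' i j * Z $ j $ k) * g k) = (\<Sum>j\<in>UNIV. M' i j * bias g j)"
    by (simp add: bias_def sum_distrib_left sum_distrib_right mult.assoc) (rule sum.swap)
  finally show ?thesis by simp
qed

lemma stationary_difference_eq:
  "(\<Sum>i\<in>UNIV. p i * g i) - (\<Sum>i\<in>UNIV. p' i * g i)
     = (\<Sum>i\<in>UNIV. p i * (\<Sum>j\<in>UNIV. (M i j - M' i j) * bias g j))"
proof -
  have "(\<Sum>i\<in>UNIV. p i * g i) - (\<Sum>k\<in>UNIV. p' k * g k) = (\<Sum>i\<in>UNIV. p i * (g i - (\<Sum>k\<in>UNIV. p' k * g k)))"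
    using stationary_sum[OF p] by (simp add: right_diff_distrib sum_subtractf sum_distrib_right[symmetric])
  also have "\<dots> = (\<Sum>i\<in>UNIV. p i * bias g i) - (\<Sum>i\<in>UNIV. p i * (\<Sum>j\<in>UNIV. M' i j * bias g j))"
    by (simp add: bias_poisson right_diff_distrib sum_subtractf)
  also have "(\<Sum>i\<in>UNIV. p i * bias g i) = (\<Sum>i\<in>UNIV. p i * (\<Sum>j\<in>UNIV. M i j * bias g j))"
    by (rule stationary_sum_step[OF p, symmetric])
  finally show ?thesis by (simp add: left_diff_distrib right_diff_distrib sum_subtractf)
qed

lemma stationary_perturbation_bound:
  assumes g: "\<And>k. \<bar>g k\<bar> \<le> e"
  shows "\<bar>(\<Sum>i\<in>UNIV. p i * g i) - (\<Sum>i\<in>UNIV. p' i * g i)\<bar>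
           \<le> (kemeny M' - 1) * e * (\<Sum>i\<in>UNIV. p i * (\<Sum>j\<in>UNIV. \<bar>M i j - M' i j\<bar>))"
proof -
  have row: "\<bar>\<Sum>j\<in>UNIV. (M i j - M' i j) * bias g j\<bar>
               \<le> (kemeny M' - 1) * e * (\<Sum>j\<in>UNIV. \<bar>M i j - M' i j\<bar>)" for i
    using M M' bias_oscillation[OF g]
    by (intro zero_sum_oscillation_bound) (simp_all add: sum_subtractf stochastic_row_sum)
  have "\<bar>(\<Sum>i\<in>UNIV. p i * g i) - (\<Sum>i\<in>UNIV. p' i * g i)\<bar>
          \<le> (\<Sum>i\<in>UNIV. \<bar>p i * (\<Sum>j\<in>UNIV. (M i j - M' i j) * bias g j)\<bar>)"
    unfolding stationary_difference_eq by (rule sum_abs)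
  also have "\<dots> \<le> (\<Sum>i\<in>UNIV. p i * ((kemeny M' - 1) * e * (\<Sum>j\<in>UNIV. \<bar>M i j - M' i j\<bar>)))"
    using stationary_nonneg[OF p] row by (intro sum_mono) (simp add: abs_mult mult_left_mono)
  finally show ?thesis by (simp add: sum_distrib_left mult.left_commute)
qed

end

section \<open>Products, total variation and Pinsker's inequality\<close>

lemma sum_PiE_insert:
  assumes "j \<notin> I"
  shows "(\<Sum>g\<in>PiE (insert j I) B. f g) = (\<Sum>y\<in>B j. \<Sum>g\<in>PiE I B. f (g(j := y)))"
proof -
  have "(\<Sum>g\<in>PiE (insert j I) B. f g) = (\<Sum>g\<in>(\<lambda>(y, g). g(j := y)) ` (B j \<times> PiE I B). f g)"
    by (simp add: PiE_insert_eq)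
  also have "\<dots> = (\<Sum>(y, g)\<in>B j \<times> PiE I B. f (g(j := y)))"
    by (subst sum.reindex[OF inj_combinator[OF assms]]) (simp add: case_prod_unfold)
  also have "\<dots> = (\<Sum>y\<in>B j. \<Sum>g\<in>PiE I B. f (g(j := y)))"
    by (rule sum.cartesian_product[symmetric])
  finally show ?thesis .
qed

lemma total_variation_product:
  fixes p q :: "'i \<Rightarrow> 'a \<Rightarrow> real"
  assumes "finite I" and fin: "\<And>i. finite (B i)" and p0: "\<And>i x. 0 \<le> p i x" and q0: "\<And>i x. 0 \<le> q i x"
    and p1: "\<And>i. sum (p i) (B i) = 1" and q1: "\<And>i. sum (q i) (B i) = 1"
  shows "(\<Sum>g\<in>PiE I B. \<bar>(\<Prod>i\<in>I. p i (g i)) - (\<Prod>i\<in>I. q i (g i))\<bar>)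
           \<le> (\<Sum>i\<in>I. \<Sum>x\<in>B i. \<bar>p i x - q i x\<bar>)"
  using assms(1)
proof (induction I rule: finite_induct)
  case empty
  then show ?case by simp
next
  case (insert j I)
  let ?P = "\<lambda>g. \<Prod>i\<in>I. p i (g i)" and ?Q = "\<lambda>g. \<Prod>i\<in>I. q i (g i)"
  have Q1: "(\<Sum>g\<in>PiE I B. ?Q g) = 1"
    using prod_sum_PiE[of I B q, symmetric] insert q1 fin by simp
  have split: "\<bar>p j y * ?P g - q j y * ?Q g\<bar> \<le> p j y * \<bar>?P g - ?Q g\<bar> + \<bar>p j y - q j y\<bar> * ?Q g"
    for y g
  proof -
    have "p j y * ?P g - q j y * ?Q g = p j y * (?P g - ?Q g) + (p j y - q j y) * ?Q g"
      by (simp add: algebra_simps)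
    also have "\<bar>\<dots>\<bar> \<le> \<bar>p j y * (?P g - ?Q g)\<bar> + \<bar>(p j y - q j y) * ?Q g\<bar>"
      by (rule abs_triangle_ineq)
    finally show ?thesis
      using p0 q0 by (simp add: abs_mult prod_nonneg)
  qed
  have "(\<Sum>g\<in>PiE (insert j I) B. \<bar>(\<Prod>i\<in>insert j I. p i (g i)) - (\<Prod>i\<in>insert j I. q i (g i))\<bar>)
      = (\<Sum>y\<in>B j. \<Sum>g\<in>PiE I B. \<bar>p j y * ?P g - q j y * ?Q g\<bar>)"
  proof -
    have "(\<Prod>i\<in>I. r i (if i = j then y else g i)) = (\<Prod>i\<in>I. r i (g i))" for r :: "'i \<Rightarrow> 'a \<Rightarrow> real" and y g
      using insert.hyps(2) by (intro prod.cong) auto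
    then show ?thesis using insert.hyps by (simp add: sum_PiE_insert)
  qed
  also have "\<dots> \<le> (\<Sum>y\<in>B j. \<Sum>g\<in>PiE I B. p j y * \<bar>?P g - ?Q g\<bar> + \<bar>p j y - q j y\<bar> * ?Q g)"
    by (intro sum_mono split)
  also have "\<dots> = (\<Sum>y\<in>B j. p j y) * (\<Sum>g\<in>PiE I B. \<bar>?P g - ?Q g\<bar>)
                  + (\<Sum>y\<in>B j. \<bar>p j y - q j y\<bar>) * (\<Sum>g\<in>PiE I B. ?Q g)"
    by (simp add: sum.distrib sum_distrib_left sum_distrib_right sum.swap[where A = "PiE I B"])
  also have "\<dots> \<le> (\<Sum>i\<in>I. \<Sum>x\<in>B i. \<bar>p i x - q i x\<bar>) + (\<Sum>y\<in>B j. \<bar>p j y - q j y\<bar>)"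
    using p1 Q1 insert.IH by (simp only: mult_1 mult_1_right add_right_mono)
  finally show ?case using insert.hyps by (simp add: add.commute)
qed

lemma total_variation_mixture:
  fixes K :: "'a \<Rightarrow> 's::finite \<Rightarrow> real"
  assumes "finite A" and K: "\<And>a j. a \<in> A \<Longrightarrow> 0 \<le> K a j" "\<And>a. a \<in> A \<Longrightarrow> (\<Sum>j\<in>UNIV. K a j) = 1"
  shows "(\<Sum>j\<in>UNIV. \<bar>(\<Sum>a\<in>A. f a * K a j) - (\<Sum>a\<in>A. g a * K a j)\<bar>) \<le> (\<Sum>a\<in>A. \<bar>f a - g a\<bar>)"
proof -
  have "(\<Sum>j\<in>UNIV. \<bar>(\<Sum>a\<in>A. f a * K a j) - (\<Sum>a\<in>A. g a * K a j)\<bar>)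
      = (\<Sum>j\<in>UNIV. \<bar>\<Sum>a\<in>A. (f a - g a) * K a j\<bar>)"
    by (simp add: left_diff_distrib sum_subtractf)
  also have "\<dots> \<le> (\<Sum>j\<in>UNIV. \<Sum>a\<in>A. \<bar>f a - g a\<bar> * K a j)"
    using K(1) by (intro sum_mono sum_abs[THEN order_trans] order_refl) (simp add: abs_mult)
  also have "\<dots> = (\<Sum>a\<in>A. \<bar>f a - g a\<bar> * (\<Sum>j\<in>UNIV. K a j))"
    by (subst sum.swap) (simp add: sum_distrib_left)
  finally show ?thesis using K(2) by simp
qed

lemma ln_ge_rational:
  fixes u :: real assumes u: "0 < u"
  shows "(u - 1) * (5 * u + 1) / (2 * u * (u + 2)) \<le> ln u"
proof -
  define f where "f u = ln u - (u - 1) * (5 * u + 1) / (2 * u * (u + 2))" for u :: real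
  define f' where "f' x = (x - 1) ^ 3 / (x\<^sup>2 * (x + 2)\<^sup>2)" for x :: real
  have der: "(f has_real_derivative f' x) (at x)" if "0 < x" for x
  proof -
    have "(f has_real_derivative (1 / x - ((5 * x + 1 + (x - 1) * 5) * (2 * x * (x + 2))
        - (x - 1) * (5 * x + 1) * (2 * (x + 2) + 2 * x)) / (2 * x * (x + 2))\<^sup>2)) (at x)"
      unfolding f_def using that by (auto intro!: derivative_eq_intros simp: power2_eq_square)
    moreover have "1 / x - ((5 * x + 1 + (x - 1) * 5) * (2 * x * (x + 2))
        - (x - 1) * (5 * x + 1) * (2 * (x + 2) + 2 * x)) / (2 * x * (x + 2))\<^sup>2 = f' x"
    proof -
      have "x \<noteq> 0" "x + 2 \<noteq> 0" using that by auto
      then show ?thesis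
        unfolding f'_def by (simp add: divide_simps power2_eq_square power3_eq_cube) algebra
    qed
    ultimately show ?thesis by simp
  qed
  have "f 1 \<le> f u"
  proof (cases "1 \<le> u")
    case True
    have "0 \<le> f' x" if "1 \<le> x" for x using that by (simp add: f'_def)
    then show ?thesis
      using der True by (intro DERIV_nonneg_imp_nondecreasing[of 1 u f]) (auto intro!: exI[of _ "f' _"])
  next
    case False
    have "f' x \<le> 0" if "x \<le> 1" for x
      using that by (simp add: f'_def power_le_zero_eq divide_nonpos_nonneg)
    then show ?thesis
      using der False u by (intro DERIV_nonpos_imp_nonincreasing[of u 1 f]) (auto intro!: exI[of _ "f' _"])
  qed
  then show ?thesis by (simp add: f_def)
qed

definition kl_real :: "'a set \<Rightarrow> ('a \<Rightarrow> real) \<Rightarrow> ('a \<Rightarrow> real) \<Rightarrow> real" where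
  "kl_real A p q = (\<Sum>x\<in>A. if p x = 0 then 0 else p x * ln (p x / q x))"

lemma kl_term_ge:
  fixes p q :: real assumes p: "0 \<le> p" and q: "0 \<le> q" and pq: "q = 0 \<Longrightarrow> p = 0"
  shows "(p - q) + 3 * (p - q)\<^sup>2 / (2 * p + 4 * q) \<le> (if p = 0 then 0 else p * ln (p / q))"
proof (cases "p = 0")
  case True
  then show ?thesis using q by (cases "q = 0") (simp_all add: power2_eq_square)
next
  case False
  then have "0 < p" "0 < q" using p q pq by force+
  have "p * ((p/q - 1) * (5 * (p/q) + 1) / (2 * (p/q) * (p/q + 2))) \<le> p * ln (p / q)"
    using \<open>0 < p\<close> \<open>0 < q\<close> by (intro mult_left_mono ln_ge_rational) auto
  moreover have "p * ((p/q - 1) * (5 * (p/q) + 1) / (2 * (p/q) * (p/q + 2)))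
                   = (p - q) + 3 * (p - q)\<^sup>2 / (2 * p + 4 * q)"
    using \<open>0 < p\<close> \<open>0 < q\<close> by (simp add: divide_simps power2_eq_square) algebra
  ultimately show ?thesis using False by simp
qed

lemma pinsker:
  fixes p q :: "'a \<Rightarrow> real"
  assumes "finite A" and p: "\<And>x. 0 \<le> p x" and q: "\<And>x. 0 \<le> q x"
    and p1: "sum p A = 1" and q1: "sum q A = 1" and pq: "\<And>x. x \<in> A \<Longrightarrow> q x = 0 \<Longrightarrow> p x = 0"
  shows "(\<Sum>x\<in>A. \<bar>p x - q x\<bar>)\<^sup>2 \<le> 2 * kl_real A p q"
proof -
  define w where "w x = 2 * p x + 4 * q x" for x
  have w: "0 \<le> w x" for x using p q by (simp add: w_def)
  have "(\<Sum>x\<in>A. (p x - q x) + 3 * (p x - q x)\<^sup>2 / w x) \<le> kl_real A p q"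
    unfolding kl_real_def w_def using p q pq by (intro sum_mono kl_term_ge) auto
  then have chi: "(\<Sum>x\<in>A. 3 * (p x - q x)\<^sup>2 / w x) \<le> kl_real A p q"
    using p1 q1 by (simp add: sum.distrib sum_subtractf)
  \<comment> \<open>Cauchy-Schwarz with weights \<open>w\<close>, whose total is 6\<close>
  have "\<bar>p x - q x\<bar> = (\<bar>p x - q x\<bar> / sqrt (w x)) * sqrt (w x)" for x
    using p[of x] q[of x] w[of x] by (cases "w x = 0") (auto simp: w_def)
  then have "(\<Sum>x\<in>A. \<bar>p x - q x\<bar>)\<^sup>2 = (\<Sum>x\<in>A. (\<bar>p x - q x\<bar> / sqrt (w x)) * sqrt (w x))\<^sup>2"
    by simp
  also have "\<dots> \<le> (\<Sum>x\<in>A. (\<bar>p x - q x\<bar> / sqrt (w x))\<^sup>2) * (\<Sum>x\<in>A. (sqrt (w x))\<^sup>2)"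
    by (rule Cauchy_Schwarz_ineq_sum)
  also have "(\<Sum>x\<in>A. (sqrt (w x))\<^sup>2) = 6"
    using w p1 q1 by (simp add: w_def sum.distrib sum_distrib_left[symmetric])
  also have "(\<Sum>x\<in>A. (\<bar>p x - q x\<bar> / sqrt (w x))\<^sup>2) = (\<Sum>x\<in>A. (p x - q x)\<^sup>2 / w x)"
    using w by (simp add: power_divide)
  also have "\<dots> * 6 = 2 * (\<Sum>x\<in>A. 3 * (p x - q x)\<^sup>2 / w x)"
    by (subst sum_distrib_right, subst sum_distrib_left, rule sum.cong, simp_all)
  finally show ?thesis using chi by simp
qed

lemma kl_real_nonneg:
  fixes p q :: "'a \<Rightarrow> real"
  assumes "finite A" and "\<And>x. 0 \<le> p x" and "\<And>x. 0 \<le> q x"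
    and "sum p A = 1" and "sum q A = 1" and "\<And>x. x \<in> A \<Longrightarrow> q x = 0 \<Longrightarrow> p x = 0"
  shows "0 \<le> kl_real A p q"
  using pinsker[OF assms] zero_le_power2[of "\<Sum>x\<in>A. \<bar>p x - q x\<bar>"] by linarith

lemma sum_mult_sqrt_le_sqrt_sum:
  fixes w k :: "'s \<Rightarrow> real"
  assumes w: "\<And>s. 0 \<le> w s" and w1: "sum w S = 1" and k: "\<And>s. 0 \<le> k s"
  shows "(\<Sum>s\<in>S. w s * sqrt (k s)) \<le> sqrt (\<Sum>s\<in>S. w s * k s)"
proof (rule real_le_rsqrt)
  have "(\<Sum>s\<in>S. w s * sqrt (k s)) = (\<Sum>s\<in>S. sqrt (w s) * (sqrt (w s) * sqrt (k s)))"
    using w by (intro sum.cong refl) (simp add: mult.assoc[symmetric])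
  then have "(\<Sum>s\<in>S. w s * sqrt (k s))\<^sup>2
               \<le> (\<Sum>s\<in>S. (sqrt (w s))\<^sup>2) * (\<Sum>s\<in>S. (sqrt (w s) * sqrt (k s))\<^sup>2)"
    using Cauchy_Schwarz_ineq_sum[of "\<lambda>s. sqrt (w s)" "\<lambda>s. sqrt (w s) * sqrt (k s)" S] by simp
  also have "\<dots> = (\<Sum>s\<in>S. w s * k s)" using w k w1 by (simp add: power_mult_distrib)
  finally show "(\<Sum>s\<in>S. w s * sqrt (k s))\<^sup>2 \<le> (\<Sum>s\<in>S. w s * k s)" .
qed

section \<open>The induced chains of a team game\<close>

locale team_game =
  fixes Act :: "'i::finite \<Rightarrow> 'a set" and P :: "'s::finite \<Rightarrow> ('i \<Rightarrow> 'a) \<Rightarrow> 's \<Rightarrow> real"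
  assumes Act_fin: "\<And>i. finite (Act i)" and Act_ne: "\<And>i. Act i \<noteq> {}"
    and P_nonneg: "\<And>s a s'. a \<in> joint_actions Act \<Longrightarrow> 0 \<le> P s a s'"
    and P_stoch: "\<And>s a. a \<in> joint_actions Act \<Longrightarrow> (\<Sum>s'\<in>UNIV. P s a s') = 1"
    and ergodic: "\<And>nu. nu \<in> joint_policies Act \<Longrightarrow> ergodic_chain (Pmu Act P nu)"
begin

lemma finite_joint_actions: "finite (joint_actions Act)"
  unfolding joint_actions_def using Act_fin by (intro finite_PiE) auto

lemma policy_nonneg: "mu \<in> joint_policies Act \<Longrightarrow> 0 \<le> mu i s x"
  by (simp add: joint_policies_def agent_policy_def)

lemma policy_sum: "mu \<in> joint_policies Act \<Longrightarrow> (\<Sum>x\<in>Act i. mu i s x) = 1"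
  by (simp add: joint_policies_def agent_policy_def)

lemma jprob_nonneg: "mu \<in> joint_policies Act \<Longrightarrow> 0 \<le> jprob mu s a"
  unfolding jprob_def by (intro prod_nonneg) (auto intro: policy_nonneg)

lemma jprob_sum:
  assumes "mu \<in> joint_policies Act" shows "(\<Sum>a\<in>joint_actions Act. jprob mu s a) = 1"
proof -
  have "(\<Sum>a\<in>joint_actions Act. jprob mu s a) = (\<Prod>i\<in>UNIV. \<Sum>x\<in>Act i. mu i s x)"
    unfolding jprob_def joint_actions_def by (rule prod_sum_PiE[symmetric]) (auto intro: Act_fin)
  then show ?thesis using policy_sum[OF assms] by simp
qed

lemma stochastic_Pmu:
  assumes mu: "mu \<in> joint_policies Act" shows "stochastic (Pmu Act P mu)"
proof -
  have "(\<Sum>s'\<in>UNIV. Pmu Act P mu s s') = (\<Sum>a\<in>joint_actions Act. jprob mu s a * (\<Sum>s'\<in>UNIV. P s a s'))"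
    for s unfolding Pmu_def by (simp add: sum_distrib_left) (rule sum.swap)
  then show ?thesis
    unfolding stochastic_def using jprob_sum[OF mu] P_stoch
    by (auto simp: Pmu_def intro!: sum_nonneg mult_nonneg_nonneg jprob_nonneg[OF mu] P_nonneg)
qed

text \<open>
  \<open>kappa_star\<close> is a supremum, so the Kemeny constants need a bound that is uniform in the
  policy. It comes from connectivity with the uniform edge weight \<open>edge_floor\<close>: in every state
  each agent has an action of probability at least \<open>1 / card (Act i)\<close>, and the deterministic
  policy playing these actions is irreducible.
\<close>
definition action_floor :: real where
  "action_floor = (\<Prod>i\<in>UNIV. 1 / real (card (Act i)))"

definition transition_floor :: real where
  "transition_floor = Min (insert 1 {P s a s' |s a s'. a \<in> joint_actions Act \<and> 0 < P s a s'})"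

definition edge_floor :: real where
  "edge_floor = action_floor * transition_floor"

lemma card_Act_pos: "0 < card (Act i)"
  using Act_fin Act_ne by (simp add: card_gt_0_iff)

lemma action_floor_bounds: "0 < action_floor" "action_floor \<le> 1"
  unfolding action_floor_def using card_Act_pos
  by (auto intro!: prod_pos prod_le_1 simp: divide_le_eq_1 Suc_leI)

lemma finite_positive_transitions:
  "finite {P s a s' |s a s'. a \<in> joint_actions Act \<and> 0 < P s a s'}"
proof -
  have "{P s a s' |s a s'. a \<in> joint_actions Act \<and> 0 < P s a s'}
          \<subseteq> (\<lambda>(s, a, s'). P s a s') ` (UNIV \<times> joint_actions Act \<times> UNIV)"
    by (fastforce simp: image_iff)
  then show ?thesis
    by (rule finite_subset) (auto intro!: finite_imageI finite_cartesian_product finite_joint_actions)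
qed

lemma transition_floor_bounds: "0 < transition_floor" "transition_floor \<le> 1"
  unfolding transition_floor_def using finite_positive_transitions by (auto simp: Min_gr_iff)

lemma transition_floor_le: "a \<in> joint_actions Act \<Longrightarrow> 0 < P s a s' \<Longrightarrow> transition_floor \<le> P s a s'"
  unfolding transition_floor_def using finite_positive_transitions by (intro Min_le) auto

lemma edge_floor_bounds: "0 < edge_floor" "edge_floor \<le> 1"
  using action_floor_bounds transition_floor_bounds by (auto simp: edge_floor_def mult_le_one)

lemma exists_heavy_action:
  assumes mu: "mu \<in> joint_policies Act" shows "\<exists>x\<in>Act i. 1 / real (card (Act i)) \<le> mu i s x"
proof (rule ccontr)
  assume "\<not> ?thesis"
  then have "(\<Sum>x\<in>Act i. mu i s x) < (\<Sum>x\<in>Act i. 1 / real (card (Act i)))"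
    using Act_fin Act_ne by (intro sum_strict_mono) auto
  also have "\<dots> = 1" using card_Act_pos[of i] by simp
  finally show False using policy_sum[OF mu] by simp
qed

lemma deterministic_policy:
  assumes d: "\<And>s. d s \<in> joint_actions Act"
  defines "delta \<equiv> \<lambda>i s x. if x = d s i then 1 else (0::real)"
  shows "delta \<in> joint_policies Act" and "Pmu Act P delta s s' = P s (d s) s'"
proof -
  show "delta \<in> joint_policies Act"
    using d Act_fin by (auto simp: joint_policies_def agent_policy_def joint_actions_def delta_def)
  have "jprob delta s a = (if a = d s then 1 else 0)" for a
    unfolding jprob_def delta_def by (auto simp: prod.neutral fun_eq_iff intro: prod_zero)
  then have "Pmu Act P delta s s' = (\<Sum>a\<in>joint_actions Act. if a = d s then P s a s' else 0)"
    unfolding Pmu_def by (intro sum.cong) auto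
  then show "Pmu Act P delta s s' = P s (d s) s'" using d[of s] finite_joint_actions by simp
qed

lemma connected_within_Pmu:
  assumes mu: "mu \<in> joint_policies Act"
  shows "connected_within (Pmu Act P mu) edge_floor CARD('s \<times> 's)"
proof -
  define d where "d s = (\<lambda>i. SOME x. x \<in> Act i \<and> 1 / real (card (Act i)) \<le> mu i s x)" for s
  have d: "d s i \<in> Act i" "1 / real (card (Act i)) \<le> mu i s (d s i)" for s i
    using someI_ex[OF exists_heavy_action[OF mu, of i s, unfolded Bex_def]] by (auto simp: d_def)
  have d_joint: "d s \<in> joint_actions Act" for s using d by (auto simp: joint_actions_def)
  define delta where "delta i s x = (if x = d s i then 1 else (0::real))" for i s x
  note delta = deterministic_policy[OF d_joint, folded delta_def]
  have edge: "edge_floor \<le> Pmu Act P mu a b" if "0 < Pmu Act P delta a b" for a b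
  proof -
    have "edge_floor \<le> jprob mu a (d a) * P a (d a) b"
      unfolding edge_floor_def jprob_def action_floor_def
      using that delta(2) transition_floor_le[OF d_joint] action_floor_bounds
        transition_floor_bounds card_Act_pos d
      by (intro mult_mono prod_mono) (auto simp: action_floor_def policy_nonneg[OF mu] prod_nonneg)
    also have "\<dots> \<le> Pmu Act P mu a b"
      unfolding Pmu_def using d_joint[of a] finite_joint_actions jprob_nonneg[OF mu] P_nonneg
      by (intro member_le_sum[where f = "\<lambda>x. jprob mu a x * P a x b"]) auto
    finally show ?thesis .
  qed
  have irr: "irreducible_chain (Pmu Act P delta)"
    using ergodic[OF delta(1)] by (simp add: ergodic_chain_def)
  show ?thesis unfolding connected_within_def
  proof (intro allI)
    fix i k
    obtain n where "n \<le> CARD('s \<times> 's)" "(i, k) \<in> {(a, b). 0 < Pmu Act P delta a b} ^^ n"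
      using irreducible_chain_short_paths[OF stochastic_Pmu[OF delta(1)] irr] by blast
    then show "\<exists>n\<le>CARD('s \<times> 's). (i, k) \<in> {(a, b). edge_floor \<le> Pmu Act P mu a b} ^^ n"
      using relpowp_mono[to_set, of "{(a, b). 0 < Pmu Act P delta a b}"
          "{(a, b). edge_floor \<le> Pmu Act P mu a b}"] edge
      by blast
  qed
qed

end

context team_game
begin

lemma stationary_pi_mu:
  assumes mu: "mu \<in> joint_policies Act" shows "stationary (Pmu Act P mu) (pi_mu Act P mu)"
proof -
  obtain p where p: "stationary (Pmu Act P mu) p"
    using stationary_exists[OF stochastic_Pmu[OF mu]] by blast
  have "stat_dist (Pmu Act P mu) = p"
    using stat_dist_eqI[OF stochastic_Pmu[OF mu] connected_within_Pmu[OF mu] edge_floor_bounds p] .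
  then show ?thesis using p by (simp add: pi_mu_def)
qed

lemma chain_perturbation_Pmu:
  "mu \<in> joint_policies Act \<Longrightarrow> mu' \<in> joint_policies Act \<Longrightarrow>
     chain_perturbation (Pmu Act P mu) (Pmu Act P mu') (pi_mu Act P mu) (pi_mu Act P mu')
       edge_floor CARD('s \<times> 's)"
  by unfold_locales (blast intro: stochastic_Pmu connected_within_Pmu edge_floor_bounds stationary_pi_mu)+

lemma kemeny_le_kappa_star:
  assumes "mu \<in> joint_policies Act" shows "kemeny (Pmu Act P mu) \<le> kappa_star Act P"
proof -
  have "bdd_above ((\<lambda>mu. kemeny (Pmu Act P mu)) ` joint_policies Act)"
    using chain_perturbation.kemeny_le[OF chain_perturbation_Pmu] by (intro bdd_aboveI2) blast
  then show ?thesis unfolding kappa_star_def using assms by (rule cSUP_upper2) simp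
qed

end

section \<open>Mean-variance advantages\<close>

locale mean_variance_game = team_game Act P
  for Act :: "'i::finite \<Rightarrow> 'a set" and P :: "'s::finite \<Rightarrow> ('i \<Rightarrow> 'a) \<Rightarrow> 's \<Rightarrow> real" +
  fixes r :: "'s \<Rightarrow> ('i \<Rightarrow> 'a) \<Rightarrow> real" and beta :: real
begin

definition mean_advantage :: "('i \<Rightarrow> 's \<Rightarrow> 'a \<Rightarrow> real) \<Rightarrow> ('i \<Rightarrow> 's \<Rightarrow> 'a \<Rightarrow> real) \<Rightarrow> 's \<Rightarrow> real"
  where "mean_advantage mu mu' s = (\<Sum>a\<in>joint_actions Act. jprob mu' s a * Af Act P r beta mu s a)"

lemma abs_mean_advantage_le: "\<bar>mean_advantage mu mu' s\<bar> \<le> eps_f Act P r beta mu mu'"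
  unfolding eps_f_def mean_advantage_def by (rule Max_ge) auto

definition stationary_expectation ::
    "('i \<Rightarrow> 's \<Rightarrow> 'a \<Rightarrow> real) \<Rightarrow> ('s \<Rightarrow> ('i \<Rightarrow> 'a) \<Rightarrow> real) \<Rightarrow> real" where
  "stationary_expectation mu g =
     (\<Sum>s\<in>UNIV. pi_mu Act P mu s * (\<Sum>a\<in>joint_actions Act. jprob mu s a * g s a))"

lemma stationary_expectation_add:
  "stationary_expectation mu (\<lambda>s a. f s a + g s a)
     = stationary_expectation mu f + stationary_expectation mu g"
  by (simp add: stationary_expectation_def distrib_left sum.distrib)

lemma stationary_expectation_cmult:
  "stationary_expectation mu (\<lambda>s a. c * f s a) = c * stationary_expectation mu f"
  by (simp add: stationary_expectation_def sum_distrib_left mult.left_commute)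

lemma stationary_expectation_const:
  assumes mu: "mu \<in> joint_policies Act" shows "stationary_expectation mu (\<lambda>s a. c) = c"
  using jprob_sum[OF mu] stationary_sum[OF stationary_pi_mu[OF mu]]
  by (simp add: stationary_expectation_def sum_distrib_right[symmetric])

lemma stationary_expectation_fsa:
  assumes mu': "mu' \<in> joint_policies Act"
  shows "stationary_expectation mu' (fsa Act P r beta mu)
           = Jmv Act P r beta mu' - beta * (eta Act P r mu' - eta Act P r mu)\<^sup>2"
proof -
  let ?e = "eta Act P r mu" and ?e' = "eta Act P r mu'"
  \<comment> \<open>recentre the square at \<open>eta mu'\<close>, where it averages to \<open>zeta mu'\<close>\<close>
  have "(r s a - ?e)\<^sup>2 = (r s a - ?e')\<^sup>2 + 2 * (?e' - ?e) * r s a + (?e\<^sup>2 - ?e'\<^sup>2)" for s a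
    by (simp add: power2_eq_square algebra_simps)
  then have "stationary_expectation mu' (fsa Act P r beta mu)
      = stationary_expectation mu'
          (\<lambda>s a. r s a + (- beta) * ((r s a - ?e')\<^sup>2 + 2 * (?e' - ?e) * r s a + (?e\<^sup>2 - ?e'\<^sup>2)))"
    unfolding fsa_def by simp
  also have "\<dots> = ?e' + (- beta) * (zeta Act P r mu' + 2 * (?e' - ?e) * ?e' + (?e\<^sup>2 - ?e'\<^sup>2))"
    by (simp only: stationary_expectation_add stationary_expectation_cmult
        stationary_expectation_const[OF mu'])
      (simp add: stationary_expectation_def eta_def zeta_def)
  also have "\<dots> = Jmv Act P r beta mu' - beta * (?e' - ?e)\<^sup>2"
    by (simp add: Jmv_def power2_eq_square algebra_simps)
  finally show ?thesis .
qed

lemma mean_advantage_eq: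
  assumes mu': "mu' \<in> joint_policies Act"
  shows "mean_advantage mu mu' s
           = (\<Sum>a\<in>joint_actions Act. jprob mu' s a * fsa Act P r beta mu s a) - Jmv Act P r beta mu
             + (\<Sum>s'\<in>UNIV. Pmu Act P mu' s s' * Vf Act P r beta mu s') - Vf Act P r beta mu s"
proof -
  have "(\<Sum>a\<in>joint_actions Act. jprob mu' s a * (\<Sum>s'\<in>UNIV. P s a s' * Vf Act P r beta mu s'))
          = (\<Sum>s'\<in>UNIV. Pmu Act P mu' s s' * Vf Act P r beta mu s')"
    unfolding Pmu_def by (simp add: sum_distrib_left sum_distrib_right mult.assoc) (rule sum.swap)
  then show ?thesis
    using jprob_sum[OF mu']
    unfolding mean_advantage_def Af_def Qf_def
    by (simp add: distrib_left right_diff_distrib sum.distrib sum_subtractf sum_distrib_right[symmetric])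
qed

text \<open>The value terms cancel under \<open>pi_mu Act P mu'\<close>, so no property of \<open>Vf\<close> is needed.\<close>
lemma performance_difference:
  assumes mu': "mu' \<in> joint_policies Act"
  shows "(\<Sum>s\<in>UNIV. pi_mu Act P mu' s * mean_advantage mu mu' s)
           = Jmv Act P r beta mu' - Jmv Act P r beta mu - beta * (eta Act P r mu' - eta Act P r mu)\<^sup>2"
proof -
  let ?p' = "pi_mu Act P mu'" and ?V = "Vf Act P r beta mu"
  have st: "stationary (Pmu Act P mu') ?p'" by (rule stationary_pi_mu[OF mu'])
  have "(\<Sum>s\<in>UNIV. ?p' s * mean_advantage mu mu' s)
      = stationary_expectation mu' (fsa Act P r beta mu) - (\<Sum>s\<in>UNIV. ?p' s) * Jmv Act P r beta mu
        + (\<Sum>s\<in>UNIV. ?p' s * (\<Sum>s'\<in>UNIV. Pmu Act P mu' s s' * ?V s')) - (\<Sum>s\<in>UNIV. ?p' s * ?V s)"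
    unfolding mean_advantage_eq[OF mu'] stationary_expectation_def
    by (simp add: distrib_left right_diff_distrib sum.distrib sum_subtractf sum_distrib_right)
  also have "\<dots> = stationary_expectation mu' (fsa Act P r beta mu) - Jmv Act P r beta mu"
    using stationary_sum_step[OF st, of ?V] stationary_sum[OF st] by simp
  finally show ?thesis by (simp add: stationary_expectation_fsa[OF mu'])
qed

lemma stationary_mean_advantage_le:
  assumes "0 \<le> beta" and "mu' \<in> joint_policies Act"
  shows "(\<Sum>s\<in>UNIV. pi_mu Act P mu' s * mean_advantage mu mu' s)
           \<le> Jmv Act P r beta mu' - Jmv Act P r beta mu"
  using performance_difference[OF assms(2)] assms(1) by simp

end

context mean_variance_game
begin

definition expected_partial_Q ::
    "('i \<Rightarrow> 's \<Rightarrow> 'a \<Rightarrow> real) \<Rightarrow> ('i \<Rightarrow> 's \<Rightarrow> 'a \<Rightarrow> real) \<Rightarrow> 's \<Rightarrow> 'i set \<Rightarrow> real" where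
  "expected_partial_Q mu mu' s S =
     (\<Sum>b\<in>PiE S Act. (\<Prod>j\<in>S. mu' j s (b j)) * QfS Act P r beta mu S s b)"

lemma expected_partial_Q_empty: "expected_partial_Q mu mu' s {} = Vf Act P r beta mu s"
  by (simp add: expected_partial_Q_def QfS_def)

lemma expected_partial_Q_UNIV:
  "expected_partial_Q mu mu' s UNIV = (\<Sum>a\<in>joint_actions Act. jprob mu' s a * Qf Act P r beta mu s a)"
  by (simp add: expected_partial_Q_def QfS_def joint_actions_def jprob_def)

lemma expected_agent_advantage_eq:
  assumes mu': "mu' \<in> joint_policies Act" and i: "i \<notin> S"
  shows "(\<Sum>b\<in>PiE S Act. (\<Prod>j\<in>S. mu' j s (b j)) *
            (\<Sum>a\<in>Act i. mu' i s a * AfAgent Act P r beta mu S i s b a))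
         = expected_partial_Q mu mu' s (insert i S) - expected_partial_Q mu mu' s S"
proof -
  let ?Q1 = "QfS Act P r beta mu (insert i S) s" and ?Q0 = "QfS Act P r beta mu S s"
  let ?pr = "\<lambda>b. \<Prod>j\<in>S. mu' j s (b j)"
  have pr_upd: "(\<Prod>j\<in>insert i S. mu' j s ((b(i := a)) j)) = mu' i s a * ?pr b" for a b
  proof -
    have "(\<Prod>j\<in>S. mu' j s ((b(i := a)) j)) = ?pr b" using i by (intro prod.cong) auto
    then show ?thesis using i by simp
  qed
  have "(\<Sum>b\<in>PiE S Act. ?pr b * (\<Sum>a\<in>Act i. mu' i s a * AfAgent Act P r beta mu S i s b a))
      = (\<Sum>b\<in>PiE S Act. \<Sum>a\<in>Act i. ?pr b * mu' i s a * ?Q1 (b(i := a)))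
        - (\<Sum>b\<in>PiE S Act. ?pr b * (\<Sum>a\<in>Act i. mu' i s a) * ?Q0 b)"
    unfolding AfAgent_def
    by (simp add: right_diff_distrib sum_subtractf sum_distrib_left sum_distrib_right mult.assoc)
  also have "(\<Sum>b\<in>PiE S Act. ?pr b * (\<Sum>a\<in>Act i. mu' i s a) * ?Q0 b) = expected_partial_Q mu mu' s S"
    using policy_sum[OF mu'] by (simp add: expected_partial_Q_def)
  also have "(\<Sum>b\<in>PiE S Act. \<Sum>a\<in>Act i. ?pr b * mu' i s a * ?Q1 (b(i := a)))
      = (\<Sum>a\<in>Act i. \<Sum>b\<in>PiE S Act. (\<Prod>j\<in>insert i S. mu' j s ((b(i := a)) j)) * ?Q1 (b(i := a)))"
    unfolding pr_upd by (subst sum.swap) (simp add: mult.commute)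
  also have "\<dots> = expected_partial_Q mu mu' s (insert i S)"
    unfolding expected_partial_Q_def by (rule sum_PiE_insert[OF i, symmetric])
  finally show ?thesis .
qed

lemma Lf_eq_expected_partial_Q_increment:
  assumes "mu' \<in> joint_policies Act" and "i \<notin> S"
  shows "Lf Act P r beta mu S i mu' (mu' i)
           = (\<Sum>s\<in>UNIV. pi_mu Act P mu s *
                (expected_partial_Q mu mu' s (insert i S) - expected_partial_Q mu mu' s S))"
  unfolding Lf_def by (simp add: expected_agent_advantage_eq[OF assms])

lemma sum_Lf_eq_mean_advantage:
  assumes mu': "mu' \<in> joint_policies Act" and ord: "distinct ord" "set ord = UNIV"
  shows "(\<Sum>h<length ord. Lf Act P r beta mu (set (take h ord)) (ord ! h) mu' (mu' (ord ! h)))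
           = (\<Sum>s\<in>UNIV. pi_mu Act P mu s * mean_advantage mu mu' s)"
proof -
  let ?F = "\<lambda>s h. expected_partial_Q mu mu' s (set (take h ord))"
  have step: "Lf Act P r beta mu (set (take h ord)) (ord ! h) mu' (mu' (ord ! h))
      = (\<Sum>s\<in>UNIV. pi_mu Act P mu s * (?F s (Suc h) - ?F s h))" if h: "h < length ord" for h
  proof -
    have "ord ! h \<notin> set (take h ord)"
      using ord(1) h by (auto simp: in_set_conv_nth nth_eq_iff_index_eq)
    moreover have "set (take (Suc h) ord) = insert (ord ! h) (set (take h ord))"
      using h by (simp add: take_Suc_conv_app_nth)
    ultimately show ?thesis by (simp add: Lf_eq_expected_partial_Q_increment[OF mu'])
  qed
  have "(\<Sum>h<length ord. Lf Act P r beta mu (set (take h ord)) (ord ! h) mu' (mu' (ord ! h)))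
      = (\<Sum>s\<in>UNIV. pi_mu Act P mu s * (\<Sum>h<length ord. ?F s (Suc h) - ?F s h))"
    by (simp add: step sum_distrib_left) (rule sum.swap)
  also have "\<dots> = (\<Sum>s\<in>UNIV. pi_mu Act P mu s * (?F s (length ord) - ?F s 0))"
    by (simp only: sum_lessThan_telescope[of "?F _"])
  also have "\<dots> = (\<Sum>s\<in>UNIV. pi_mu Act P mu s * mean_advantage mu mu' s)"
    using ord(2) jprob_sum[OF mu']
    by (simp add: expected_partial_Q_empty expected_partial_Q_UNIV mean_advantage_def Af_def
        right_diff_distrib sum_subtractf sum_distrib_right[symmetric])
  finally show ?thesis .
qed

end

section \<open>From total variation to the penalty\<close>

lemma KL_eq_kl_real:
  assumes "\<And>x. x \<in> A \<Longrightarrow> q x = 0 \<Longrightarrow> p x = 0"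
  shows "KL A p q = ereal (kl_real A p q)"
proof -
  have "KL A p q = (\<Sum>x\<in>A. ereal (if p x = 0 then 0 else p x * ln (p x / q x)))"
    unfolding KL_def using assms by (intro sum.cong refl) auto
  then show ?thesis by (simp add: kl_real_def)
qed

lemma KL_eq_infinity:
  assumes "finite A" "x \<in> A" "q x = 0" "p x \<noteq> 0"
  shows "KL A p q = \<infinity>"
  unfolding KL_def using assms by (subst sum_Pinfty) auto

context team_game
begin

definition agent_tv :: "('i \<Rightarrow> 's \<Rightarrow> 'a \<Rightarrow> real) \<Rightarrow> ('i \<Rightarrow> 's \<Rightarrow> 'a \<Rightarrow> real) \<Rightarrow> 'i \<Rightarrow> 's \<Rightarrow> real"
  where "agent_tv mu mu' i s = (\<Sum>x\<in>Act i. \<bar>mu i s x - mu' i s x\<bar>)"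

lemma total_variation_Pmu_le:
  assumes mu: "mu \<in> joint_policies Act" and mu': "mu' \<in> joint_policies Act"
  shows "(\<Sum>j\<in>UNIV. \<bar>Pmu Act P mu s j - Pmu Act P mu' s j\<bar>) \<le> (\<Sum>i\<in>UNIV. agent_tv mu mu' i s)"
proof -
  have "(\<Sum>j\<in>UNIV. \<bar>Pmu Act P mu s j - Pmu Act P mu' s j\<bar>)
          \<le> (\<Sum>a\<in>joint_actions Act. \<bar>jprob mu s a - jprob mu' s a\<bar>)"
    unfolding Pmu_def using finite_joint_actions P_nonneg P_stoch by (intro total_variation_mixture) auto
  also have "\<dots> \<le> (\<Sum>i\<in>UNIV. agent_tv mu mu' i s)"
    unfolding jprob_def joint_actions_def agent_tv_def
    using Act_fin policy_nonneg[OF mu] policy_nonneg[OF mu'] policy_sum[OF mu] policy_sum[OF mu']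
    by (intro total_variation_product) auto
  finally show ?thesis .
qed

lemma agent_tv_le_sqrt_kl_real:
  assumes mu: "mu \<in> joint_policies Act" and mu': "mu' \<in> joint_policies Act"
    and abs_cont: "\<And>x. x \<in> Act i \<Longrightarrow> mu i s x = 0 \<Longrightarrow> mu' i s x = 0"
  shows "0 \<le> kl_real (Act i) (mu' i s) (mu i s)"
    and "agent_tv mu mu' i s \<le> sqrt (2 * kl_real (Act i) (mu' i s) (mu i s))"
proof -
  note distributions =
    Act_fin policy_nonneg[OF mu] policy_nonneg[OF mu'] policy_sum[OF mu] policy_sum[OF mu']
  show "0 \<le> kl_real (Act i) (mu' i s) (mu i s)"
    using abs_cont distributions by (intro kl_real_nonneg) auto
  have "(\<Sum>x\<in>Act i. \<bar>mu' i s x - mu i s x\<bar>)\<^sup>2 \<le> 2 * kl_real (Act i) (mu' i s) (mu i s)"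
    using abs_cont distributions by (intro pinsker) auto
  then show "agent_tv mu mu' i s \<le> sqrt (2 * kl_real (Act i) (mu' i s) (mu i s))"
    unfolding agent_tv_def by (intro real_le_rsqrt) (simp add: abs_minus_commute)
qed

lemma expected_agent_tv_le_sqrt_KL:
  assumes mu: "mu \<in> joint_policies Act" and mu': "mu' \<in> joint_policies Act"
  shows "ereal (\<Sum>s\<in>UNIV. pi_mu Act P mu s * agent_tv mu mu' i s)
           \<le> esqrt (2 * (\<Sum>s\<in>UNIV. ereal (pi_mu Act P mu s) * KL (Act i) (mu' i s) (mu i s)))"
    (is "_ \<le> esqrt (2 * ?E)")
proof (cases "\<forall>s. 0 < pi_mu Act P mu s \<longrightarrow> (\<forall>x\<in>Act i. mu i s x = 0 \<longrightarrow> mu' i s x = 0)")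
  case True
  let ?pi = "pi_mu Act P mu"
  have pi: "0 \<le> ?pi s" for s using stationary_pi_mu[OF mu] by (rule stationary_nonneg)
  define kl where "kl s = (if 0 < ?pi s then kl_real (Act i) (mu' i s) (mu i s) else 0)" for s
  have kl: "0 \<le> kl s" for s
    unfolding kl_def using True agent_tv_le_sqrt_kl_real(1)[OF mu mu'] by auto
  have "ereal (?pi s) * KL (Act i) (mu' i s) (mu i s) = ereal (?pi s * kl s)" for s
    using True pi[of s]
    by (cases "0 < ?pi s") (auto simp: kl_def KL_eq_kl_real zero_ereal_def[symmetric])
  then have E: "?E = ereal (\<Sum>s\<in>UNIV. ?pi s * kl s)" by simp
  have "?pi s * agent_tv mu mu' i s \<le> ?pi s * sqrt (2 * kl s)" for s
    using True pi[of s] agent_tv_le_sqrt_kl_real(2)[OF mu mu', of i s]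
    by (cases "0 < ?pi s") (auto simp: kl_def intro: mult_left_mono)
  then have "(\<Sum>s\<in>UNIV. ?pi s * agent_tv mu mu' i s) \<le> (\<Sum>s\<in>UNIV. ?pi s * sqrt (2 * kl s))"
    by (rule sum_mono)
  also have "\<dots> \<le> sqrt (\<Sum>s\<in>UNIV. ?pi s * (2 * kl s))"
    using pi kl stationary_sum[OF stationary_pi_mu[OF mu]] by (intro sum_mult_sqrt_le_sqrt_sum) auto
  finally show ?thesis
    unfolding E esqrt_def by (simp add: sum_distrib_left mult.left_commute)
next
  case False
  then obtain s x where "0 < pi_mu Act P mu s" "x \<in> Act i" "mu i s x = 0" "mu' i s x \<noteq> 0"
    by auto
  moreover from this have "KL (Act i) (mu' i s) (mu i s) = \<infinity>"
    using Act_fin by (intro KL_eq_infinity)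
  ultimately have "?E = \<infinity>" by (subst sum_Pinfty) auto
  then show ?thesis by (simp add: esqrt_def)
qed

end

context mean_variance_game
begin

definition tv_penalty :: "('i \<Rightarrow> 's \<Rightarrow> 'a \<Rightarrow> real) \<Rightarrow> ('i \<Rightarrow> 's \<Rightarrow> 'a \<Rightarrow> real) \<Rightarrow> 'i \<Rightarrow> real" where
  "tv_penalty mu mu' i = (kemeny (Pmu Act P mu') - 1) * eps_f Act P r beta mu mu'
                          * (\<Sum>s\<in>UNIV. pi_mu Act P mu s * agent_tv mu mu' i s)"

lemma tv_penalty_le_Wpen:
  assumes mu: "mu \<in> joint_policies Act" and mu': "mu' \<in> joint_policies Act"
  shows "ereal (tv_penalty mu mu' i) \<le> Wpen Act P r beta mu mu' i"
proof -
  interpret chain_perturbation "Pmu Act P mu" "Pmu Act P mu'" "pi_mu Act P mu" "pi_mu Act P mu'"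
      edge_floor "CARD('s \<times> 's)"
    by (rule chain_perturbation_Pmu[OF mu mu'])
  have eps: "0 \<le> eps_f Act P r beta mu mu'"
    using abs_mean_advantage_le[of mu mu' undefined] by linarith
  have kemeny: "1 \<le> kemeny (Pmu Act P mu')" "kemeny (Pmu Act P mu') \<le> kappa_star Act P"
    using one_le_kemeny kemeny_le_kappa_star[OF mu'] by simp_all
  have "0 \<le> (\<Sum>s\<in>UNIV. pi_mu Act P mu s * agent_tv mu mu' i s)"
    using stationary_nonneg[OF stationary_pi_mu[OF mu]] by (simp add: agent_tv_def sum_nonneg)
  then show ?thesis
    unfolding tv_penalty_def Wpen_def times_ereal.simps(1)[symmetric]
    using expected_agent_tv_le_sqrt_KL[OF mu mu', of i] kemeny eps
    by (intro ereal_mult_mono) (auto intro: mult_right_mono)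
qed

end

context mean_variance_game
begin

lemma stationary_shift_le_tv_penalty:
  assumes mu: "mu \<in> joint_policies Act" and mu': "mu' \<in> joint_policies Act"
  shows "(\<Sum>s\<in>UNIV. pi_mu Act P mu s * mean_advantage mu mu' s)
           - (\<Sum>s\<in>UNIV. pi_mu Act P mu' s * mean_advantage mu mu' s)
         \<le> (\<Sum>i\<in>UNIV. tv_penalty mu mu' i)"
proof -
  interpret chain_perturbation "Pmu Act P mu" "Pmu Act P mu'" "pi_mu Act P mu" "pi_mu Act P mu'"
      edge_floor "CARD('s \<times> 's)"
    by (rule chain_perturbation_Pmu[OF mu mu'])
  let ?pi = "pi_mu Act P mu" and ?c = "(kemeny (Pmu Act P mu') - 1) * eps_f Act P r beta mu mu'"
  have c: "0 \<le> ?c"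
    using one_le_kemeny abs_mean_advantage_le[of mu mu' undefined] by simp
  have "\<bar>(\<Sum>s\<in>UNIV. ?pi s * mean_advantage mu mu' s)
          - (\<Sum>s\<in>UNIV. pi_mu Act P mu' s * mean_advantage mu mu' s)\<bar>
        \<le> ?c * (\<Sum>s\<in>UNIV. ?pi s * (\<Sum>j\<in>UNIV. \<bar>Pmu Act P mu s j - Pmu Act P mu' s j\<bar>))"
    by (rule stationary_perturbation_bound[OF abs_mean_advantage_le])
  also have "\<dots> \<le> ?c * (\<Sum>s\<in>UNIV. ?pi s * (\<Sum>i\<in>UNIV. agent_tv mu mu' i s))"
    using c stationary_nonneg[OF stationary_pi_mu[OF mu]] total_variation_Pmu_le[OF mu mu']
    by (intro mult_left_mono sum_mono) auto
  also have "\<dots> = (\<Sum>i\<in>UNIV. tv_penalty mu mu' i)"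
    unfolding tv_penalty_def sum_distrib_left[of ?c, symmetric]
    by (simp add: sum_distrib_left) (rule sum.swap)
  finally show ?thesis by (simp add: abs_le_iff)
qed

lemma Jmv_ge_surrogates_minus_tv_penalty:
  assumes "0 \<le> beta" and mu: "mu \<in> joint_policies Act" and mu': "mu' \<in> joint_policies Act"
    and ord: "distinct ord" "set ord = UNIV"
  shows "Jmv Act P r beta mu
           + (\<Sum>h<length ord. Lf Act P r beta mu (set (take h ord)) (ord ! h) mu' (mu' (ord ! h))
                               - tv_penalty mu mu' (ord ! h))
         \<le> Jmv Act P r beta mu'"
proof -
  have "(\<Sum>h<length ord. tv_penalty mu mu' (ord ! h)) = (\<Sum>i\<in>UNIV. tv_penalty mu mu' i)"
    using sum.reindex_bij_betw[OF bij_betw_nth[OF ord(1) refl ord(2)[symmetric]]] by simp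
  then show ?thesis
    using sum_Lf_eq_mean_advantage[OF mu' ord] stationary_shift_le_tv_penalty[OF mu mu']
      stationary_mean_advantage_le[OF assms(1) mu', of mu]
    by (simp add: sum_subtractf)
qed

end

theorem theorem7:
  fixes Act :: "'i::finite \<Rightarrow> 'a set"
    and P :: "'s::finite \<Rightarrow> ('i \<Rightarrow> 'a) \<Rightarrow> 's \<Rightarrow> real"
    and r :: "'s \<Rightarrow> ('i \<Rightarrow> 'a) \<Rightarrow> real"
    and beta :: real
    and mu mu' :: "'i \<Rightarrow> 's \<Rightarrow> 'a \<Rightarrow> real"
    and ord :: "'i list"
  assumes Act_fin: "\<And>i. finite (Act i)" and Act_ne: "\<And>i. Act i \<noteq> {}"
    and P_nonneg: "\<And>s a s'. a \<in> joint_actions Act \<Longrightarrow> 0 \<le> P s a s'"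
    and P_stoch: "\<And>s a. a \<in> joint_actions Act \<Longrightarrow> (\<Sum>s'\<in>UNIV. P s a s') = 1"
    and beta: "0 \<le> beta"
    and ergodic: "\<And>nu. nu \<in> joint_policies Act \<Longrightarrow> ergodic_chain (Pmu Act P nu)"
    and mu: "mu \<in> joint_policies Act"
    and mu': "mu' \<in> joint_policies Act"
    and ord: "distinct ord" "set ord = UNIV"
  shows "ereal (Jmv Act P r beta mu') \<ge>
           ereal (Jmv Act P r beta mu) +
           (\<Sum>h<length ord.
              ereal (Lf Act P r beta mu (set (take h ord)) (ord ! h) mu' (mu' (ord ! h)))
              - Wpen Act P r beta mu mu' (ord ! h))"
proof -
  interpret mean_variance_game Act P r beta
    by unfold_locales (fact Act_fin Act_ne P_nonneg P_stoch ergodic)+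
  let ?L = "\<lambda>h. Lf Act P r beta mu (set (take h ord)) (ord ! h) mu' (mu' (ord ! h))"
  have "ereal (Jmv Act P r beta mu)
          + (\<Sum>h<length ord. ereal (?L h) - Wpen Act P r beta mu mu' (ord ! h))
      \<le> ereal (Jmv Act P r beta mu)
          + (\<Sum>h<length ord. ereal (?L h) - ereal (tv_penalty mu mu' (ord ! h)))"
    using tv_penalty_le_Wpen[OF mu mu']
    by (intro add_left_mono sum_mono ereal_minus_mono order_refl)
  also have "\<dots> = ereal (Jmv Act P r beta mu + (\<Sum>h<length ord. ?L h - tv_penalty mu mu' (ord ! h)))"
    by simp
  also have "\<dots> \<le> ereal (Jmv Act P r beta mu')"
    using Jmv_ge_surrogates_minus_tv_penalty[OF beta mu mu' ord] by simp
  finally show ?thesis .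
qed

end
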